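(* Let $0\to x_2\to x\to x_1\to0$ be a short exact sequence of finite-dimensional $\Pi$-modules. Suppose that $\operatorname{Ext}^1_\Pi(x_2,x_2)=0$ and $\operatorname{Ext}^1_\Pi(x,x_1)=0$. Then $\operatorname{Ext}^1_\Pi(x_1,x_1)=0$ and $\operatorname{Ext}^1_\Pi(x,x)=0$.
   Context: $K$ is an algebraically closed field, $Q=(I,\Omega)$ a finite quiver without loops, and $\Pi$ its preprojective algebra: the path algebra of the double quiver $\overline Q$ (arrows $\Omega\cup\{h^{op}:h\in\Omega\}$) modulo the ideal generated by $\sum_{h\in\Omega}(hh^{op}-h^{op}h)$. For finite-dimensional $\Pi$-modules one has functorial isomorphisms $\operatorname{Ext}^1_\Pi(N,M)\cong\operatorname{Ext}^1_\Pi(M,N)^*$. *)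

theory Defs
  imports "Jordan_Normal_Form.Matrix" "HOL-Computational_Algebra.Polynomial"
begin

text \<open>Finite-dimensional modules over the preprojective algebra Pi of a finite quiver
Q = (I, Omega), with I = UNIV :: 'i (finite), Omega = UNIV :: 'a (finite), and
arrow h going from src h to tgt h.  Arrows of the double quiver are pairs (h, True) = h
and (h, False) = h^op.\<close>

record ('i, 'a, 'k) pirep =
  dimv :: "'i \<Rightarrow> nat"
  mp :: "'a \<times> bool \<Rightarrow> 'k mat"

definition dsrc :: "('a \<Rightarrow> 'i) \<Rightarrow> ('a \<Rightarrow> 'i) \<Rightarrow> 'a \<times> bool \<Rightarrow> 'i" where
  "dsrc src tgt e = (if snd e then src (fst e) else tgt (fst e))"

definition dtgt :: "('a \<Rightarrow> 'i) \<Rightarrow> ('a \<Rightarrow> 'i) \<Rightarrow> 'a \<times> bool \<Rightarrow> 'i" where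
  "dtgt src tgt e = (if snd e then tgt (fst e) else src (fst e))"

text \<open>Representation of the double quiver annihilated by the preprojective relation
sum_h (h h^op - h^op h); its component at vertex i is required to vanish.\<close>
definition pi_module :: "('a \<Rightarrow> 'i) \<Rightarrow> ('a \<Rightarrow> 'i) \<Rightarrow> ('i, 'a, 'k::field) pirep \<Rightarrow> bool" where
  "pi_module src tgt M \<longleftrightarrow>
     (\<forall>e. mp M e \<in> carrier_mat (dimv M (dtgt src tgt e)) (dimv M (dsrc src tgt e))) \<and>
     (\<forall>i. \<forall>r < dimv M i. \<forall>c < dimv M i.
        (\<Sum>h\<in>{h. tgt h = i}. (mp M (h, True) * mp M (h, False)) $$ (r, c))
      - (\<Sum>h\<in>{h. src h = i}. (mp M (h, False) * mp M (h, True)) $$ (r, c)) = 0)"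

definition pi_hom :: "('a \<Rightarrow> 'i) \<Rightarrow> ('a \<Rightarrow> 'i) \<Rightarrow> ('i, 'a, 'k::field) pirep
    \<Rightarrow> ('i, 'a, 'k) pirep \<Rightarrow> ('i \<Rightarrow> 'k mat) \<Rightarrow> bool" where
  "pi_hom src tgt M N f \<longleftrightarrow>
     (\<forall>i. f i \<in> carrier_mat (dimv N i) (dimv M i)) \<and>
     (\<forall>e. f (dtgt src tgt e) * mp M e = mp N e * f (dsrc src tgt e))"

definition pi_ses :: "('a \<Rightarrow> 'i) \<Rightarrow> ('a \<Rightarrow> 'i) \<Rightarrow> ('i, 'a, 'k::field) pirep
    \<Rightarrow> ('i, 'a, 'k) pirep \<Rightarrow> ('i, 'a, 'k) pirep \<Rightarrow> ('i \<Rightarrow> 'k mat) \<Rightarrow> ('i \<Rightarrow> 'k mat) \<Rightarrow> bool" where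
  "pi_ses src tgt A B C f g \<longleftrightarrow>
     pi_module src tgt A \<and> pi_module src tgt B \<and> pi_module src tgt C \<and>
     pi_hom src tgt A B f \<and> pi_hom src tgt B C g \<and>
     (\<forall>i. \<forall>u \<in> carrier_vec (dimv A i). f i *\<^sub>v u = 0\<^sub>v (dimv B i) \<longrightarrow> u = 0\<^sub>v (dimv A i)) \<and>
     (\<forall>i. \<forall>v \<in> carrier_vec (dimv B i).
        (g i *\<^sub>v v = 0\<^sub>v (dimv C i)) \<longleftrightarrow> (\<exists>u \<in> carrier_vec (dimv A i). f i *\<^sub>v u = v)) \<and>
     (\<forall>i. \<forall>w \<in> carrier_vec (dimv C i). \<exists>v \<in> carrier_vec (dimv B i). g i *\<^sub>v v = w)"

text \<open>Ext^1(M, N) = 0: every extension 0 -> N -> E -> M -> 0 splits.\<close>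
definition ext1_zero :: "('a \<Rightarrow> 'i) \<Rightarrow> ('a \<Rightarrow> 'i) \<Rightarrow> ('i, 'a, 'k::field) pirep
    \<Rightarrow> ('i, 'a, 'k) pirep \<Rightarrow> bool" where
  "ext1_zero src tgt M N \<longleftrightarrow>
     (\<forall>E f g. pi_ses src tgt N E M f g \<longrightarrow>
        (\<exists>s. pi_hom src tgt M E s \<and> (\<forall>i. g i * s i = 1\<^sub>m (dimv M i))))"

end

theory Submission
  imports Defs "HOL-Library.Function_Algebras"
begin

(* Ext^1 between Pi-modules is computed by Crawley-Boevey's complex
     C0(M,N) --d0--> C1(M,N) --d1--> C2(M,N),
   where C0 consists of families of linear maps M_i -> N_i, C1 of families indexed by the
   arrows of the double quiver, d0 sigma = (sigma_t(a) M_a - N_a sigma_s(a))_a has kernel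
   Hom(M,N), and d1 is the linearised preprojective relation, so that d1 d0 = 0 on Pi-modules.
   An extension of M by N is the same as a 1-cocycle (its off-diagonal block), and it splits
   exactly when the cocycle is a coboundary; hence Ext^1(M,N) = 0 iff H^1(M,N) = 0.
   The trace pairing between C1(M,N) and C1(N,M) makes d0 and d1 adjoint, which gives
   H^1(M,N) = 0 iff H^1(N,M) = 0, in particular Ext^1(x1,x) = 0.  Both conclusions then follow
   by diagram chases in the long exact sequences of Hom and H^1 attached to
   0 -> x2 -> x -> x1 -> 0 in either argument. *)

lemma mat_diff_eq_zero_iff:
  fixes A B :: "'a::ab_group_add mat"
  assumes "A \<in> carrier_mat n m" "B \<in> carrier_mat n m"
  shows "A - B = 0\<^sub>m n m \<longleftrightarrow> A = B"
  using assms by (auto simp: mat_eq_iff)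

lemma mat_diff_diff_commute:
  fixes a b c d :: "'a::ab_group_add mat"
  assumes "a \<in> carrier_mat n m" "b \<in> carrier_mat n m" "c \<in> carrier_mat n m" "d \<in> carrier_mat n m"
  shows "(a - b) - (c - d) = (a - c) - (b - d)"
  using assms by (intro eq_matI) auto

lemma mat_add_diff_add:
  fixes a b c d :: "'a::ab_group_add mat"
  assumes "a \<in> carrier_mat n m" "b \<in> carrier_mat n m" "c \<in> carrier_mat n m" "d \<in> carrier_mat n m"
  shows "(a + b) - (c + d) = (a - c) + (b - d)"
  using assms by (intro eq_matI) auto

lemma mat_diff_add_diff:
  fixes a b c :: "'a::ab_group_add mat"
  assumes "a \<in> carrier_mat n m" "b \<in> carrier_mat n m" "c \<in> carrier_mat n m"
  shows "(a - b) + (c - a) = c - b"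
  using assms by (intro eq_matI) auto

lemma mat_diff_add_cancel:
  fixes a b :: "'a::ab_group_add mat"
  assumes "a \<in> carrier_mat n m" "b \<in> carrier_mat n m"
  shows "a - b + b = a"
  using assms by (intro eq_matI) auto

lemma mat_add_diff_cancel:
  fixes a b :: "'a::ab_group_add mat"
  assumes "a \<in> carrier_mat n m" "b \<in> carrier_mat n m"
  shows "a + (b - a) = b"
  using assms by (intro eq_matI) auto

lemma mat_diff_zero:
  fixes a :: "'a::ab_group_add mat"
  assumes "a \<in> carrier_mat n m"
  shows "a - 0\<^sub>m n m = a"
  using assms by (intro eq_matI) auto

lemma mat_eq_add_imp_diff_eq:
  fixes a b c :: "'a::ab_group_add mat"
  assumes "a \<in> carrier_mat n m" "b \<in> carrier_mat n m" "c \<in> carrier_mat n m" "a = b + c"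
  shows "a - b = c"
  using assms by (intro eq_matI) auto

lemma smult_minus_distrib_mat:
  fixes A B :: "'a::ring mat"
  assumes "A \<in> carrier_mat n m" "B \<in> carrier_mat n m"
  shows "k \<cdot>\<^sub>m (A - B) = k \<cdot>\<^sub>m A - k \<cdot>\<^sub>m B"
  using assms by (intro eq_matI) (auto simp: algebra_simps)

lemma index_mult_mat_lessThan: "A \<in> carrier_mat n k \<Longrightarrow> B \<in> carrier_mat k m
  \<Longrightarrow> r < n \<Longrightarrow> c < m \<Longrightarrow>
  (A * B) $$ (r,c) = (\<Sum>j<k. A $$ (r,j) * B $$ (j,c))"
  by (simp add: scalar_prod_def atLeast0LessThan row_def col_def)

lemma mult_add_mult_diff_distrib:
  fixes Nm :: "'a::comm_ring_1 mat"
  assumes Nm: "Nm \<in> carrier_mat n n2" and P1: "P1 \<in> carrier_mat n2 m" and Q1: "Q1 \<in> carrier_mat n2 m"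
    and P2: "P2 \<in> carrier_mat n m3" and Q2: "Q2 \<in> carrier_mat n m3" and Mm: "Mm \<in> carrier_mat m3 m"
  shows "Nm * (P1 - Q1) + (P2 - Q2) * Mm = (Nm * P1 + P2 * Mm) - (Nm * Q1 + Q2 * Mm)"
proof -
  have "Nm * (P1 - Q1) + (P2 - Q2) * Mm = (Nm * P1 - Nm * Q1) + (P2 * Mm - Q2 * Mm)"
    by (simp add: mult_minus_distrib_mat[OF Nm P1 Q1] minus_mult_distrib_mat[OF P2 Q2 Mm])
  also have "\<dots> = (Nm * P1 + P2 * Mm) - (Nm * Q1 + Q2 * Mm)"
    by (rule mat_add_diff_add[symmetric]) (auto intro: mult_carrier_mat[OF Nm P1] mult_carrier_mat[OF Nm Q1]
      mult_carrier_mat[OF P2 Mm] mult_carrier_mat[OF Q2 Mm])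
  finally show ?thesis .
qed

lemma mat_commutator_telescope:
  fixes N1 :: "'a::comm_ring_1 mat"
  assumes N1: "N1 \<in> carrier_mat n n2" and N2: "N2 \<in> carrier_mat n2 n" and M1: "M1 \<in> carrier_mat m m2"
    and M2: "M2 \<in> carrier_mat m2 m" and Si: "Si \<in> carrier_mat n m" and Sj: "Sj \<in> carrier_mat n2 m2"
  shows "N1 * (Sj * M2 - N2 * Si) + (Si * M1 - N1 * Sj) * M2 = Si * (M1 * M2) - (N1 * N2) * Si"
proof -
  have "N1 * (Sj * M2 - N2 * Si) + (Si * M1 - N1 * Sj) * M2 =
     ((N1 * Sj) * M2 - (N1 * N2) * Si) + (Si * (M1 * M2) - (N1 * Sj) * M2)"
    by (simp add: mult_minus_distrib_mat[OF N1 mult_carrier_mat[OF Sj M2] mult_carrier_mat[OF N2 Si]]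
      minus_mult_distrib_mat[OF mult_carrier_mat[OF Si M1] mult_carrier_mat[OF N1 Sj] M2]
      assoc_mult_mat[OF N1 Sj M2] assoc_mult_mat[OF N1 N2 Si] assoc_mult_mat[OF Si M1 M2])
  also have "\<dots> = Si * (M1 * M2) - (N1 * N2) * Si"
    by (rule mat_diff_add_diff) (auto intro: mult_carrier_mat[OF mult_carrier_mat[OF N1 Sj] M2]
      mult_carrier_mat[OF mult_carrier_mat[OF N1 N2] Si] mult_carrier_mat[OF Si mult_carrier_mat[OF M1 M2]])
  finally show ?thesis .
qed

lemma mult_left_intertwine:
  fixes U :: "'a::comm_ring_1 mat"
  assumes U: "U \<in> carrier_mat p n" and Nm: "Nm \<in> carrier_mat n n2" and P1: "P1 \<in> carrier_mat n2 m"
    and P2: "P2 \<in> carrier_mat n m3" and Mm: "Mm \<in> carrier_mat m3 m"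
    and Nm': "Nm' \<in> carrier_mat p p2" and U2: "U2 \<in> carrier_mat p2 n2" and h: "U * Nm = Nm' * U2"
  shows "U * (Nm * P1 + P2 * Mm) = Nm' * (U2 * P1) + (U * P2) * Mm"
proof -
  have "U * (Nm * P1 + P2 * Mm) = U * (Nm * P1) + U * (P2 * Mm)"
    by (rule mult_add_distrib_mat[OF U mult_carrier_mat[OF Nm P1] mult_carrier_mat[OF P2 Mm]])
  also have "\<dots> = (U * Nm) * P1 + (U * P2) * Mm"
    by (simp add: assoc_mult_mat[OF U Nm P1] assoc_mult_mat[OF U P2 Mm])
  also have "\<dots> = Nm' * (U2 * P1) + (U * P2) * Mm"
    by (simp add: h assoc_mult_mat[OF Nm' U2 P1])
  finally show ?thesis .
qed

lemma mult_right_intertwine: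
  fixes V :: "'a::comm_ring_1 mat"
  assumes V: "V \<in> carrier_mat m p" and Nm: "Nm \<in> carrier_mat n n2" and P1: "P1 \<in> carrier_mat n2 m"
    and P2: "P2 \<in> carrier_mat n m3" and Mm: "Mm \<in> carrier_mat m3 m"
    and Mm': "Mm' \<in> carrier_mat p3 p" and V2: "V2 \<in> carrier_mat m3 p3" and h: "Mm * V = V2 * Mm'"
  shows "(Nm * P1 + P2 * Mm) * V = Nm * (P1 * V) + (P2 * V2) * Mm'"
proof -
  have "(Nm * P1 + P2 * Mm) * V = (Nm * P1) * V + (P2 * Mm) * V"
    by (rule add_mult_distrib_mat[OF mult_carrier_mat[OF Nm P1] mult_carrier_mat[OF P2 Mm] V])
  also have "\<dots> = Nm * (P1 * V) + P2 * (Mm * V)"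
    by (simp add: assoc_mult_mat[OF Nm P1 V] assoc_mult_mat[OF P2 Mm V])
  also have "\<dots> = Nm * (P1 * V) + (P2 * V2) * Mm'"
    by (simp add: h assoc_mult_mat[OF P2 V2 Mm'])
  finally show ?thesis .
qed

lemma mat_lift_columns:
  fixes F :: "'a::comm_ring_1 mat"
  assumes F: "F \<in> carrier_mat nB nA" and X: "X \<in> carrier_mat nB m"
    and ex: "\<And>j. j < m \<Longrightarrow> \<exists>u\<in>carrier_vec nA. F *\<^sub>v u = col X j"
  shows "\<exists>Y\<in>carrier_mat nA m. F * Y = X"
proof -
  define U where "U j = (SOME u. u \<in> carrier_vec nA \<and> F *\<^sub>v u = col X j)" for j
  have U: "U j \<in> carrier_vec nA \<and> F *\<^sub>v U j = col X j" if "j < m" for j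
    using ex[OF that] unfolding U_def by (metis (mono_tags, lifting) someI_ex)
  define Y where "Y = mat nA m (\<lambda>(r,c). U c $ r)"
  have Yc: "Y \<in> carrier_mat nA m" unfolding Y_def by simp
  have colY: "col Y j = U j" if "j < m" for j
    using U[OF that] that unfolding Y_def by (auto intro!: eq_vecI)
  have "F * Y = X"
  proof (rule mat_col_eqI)
    fix j assume "j < dim_col X"
    then have j: "j < m" using X by auto
    show "col (F * Y) j = col X j" using col_mult2[OF F Yc j] colY[OF j] U[OF j] by simp
  qed (use F X Yc in auto)
  then show ?thesis using Yc by blast
qed

lemma mat_inj_left_cancel:
  fixes F :: "'a::comm_ring_1 mat"
  assumes F: "F \<in> carrier_mat nB nA"
    and inj: "\<forall>u\<in>carrier_vec nA. F *\<^sub>v u = 0\<^sub>v nB \<longrightarrow> u = 0\<^sub>v nA"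
    and Y: "Y \<in> carrier_mat nA m" and Y': "Y' \<in> carrier_mat nA m" and eq: "F * Y = F * Y'"
  shows "Y = Y'"
proof (rule mat_col_eqI)
  fix j assume "j < dim_col Y'"
  then have j: "j < m" using Y' by auto
  have c1: "col Y j \<in> carrier_vec nA" "col Y' j \<in> carrier_vec nA" using Y Y' j by auto
  have "F *\<^sub>v (col Y j - col Y' j) = F *\<^sub>v col Y j - F *\<^sub>v col Y' j"
    by (rule mult_minus_distrib_mat_vec[OF F c1])
  also have "\<dots> = col (F * Y) j - col (F * Y') j" using col_mult2[OF F Y j] col_mult2[OF F Y' j] by simp
  also have "\<dots> = 0\<^sub>v nB" using eq F Y' j by simp
  finally have "col Y j - col Y' j = 0\<^sub>v nA" using inj c1 by auto
  then show "col Y j = col Y' j"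
    using c1 by (metis (no_types, lifting) carrier_vecD eq_vecI index_minus_vec(1) index_zero_vec(1) right_minus_eq)
qed (use Y Y' in auto)

lemma mat_unit_col: "(A :: 'a :: semiring_1 mat) \<in> carrier_mat n m \<Longrightarrow> j < m
  \<Longrightarrow> A *\<^sub>v unit_vec m j = col A j"
  by (intro eq_vecI) (auto simp: scalar_prod_right_unit)

definition mat_sum :: "nat \<Rightarrow> nat \<Rightarrow> 'h set \<Rightarrow>
  ('h \<Rightarrow> 'a::comm_ring_1 mat) \<Rightarrow> 'a mat" where
  "mat_sum n m S F = mat n m (\<lambda>(r,c). \<Sum>h\<in>S. F h $$ (r,c))"

lemma mat_sum_carrier[simp]: "mat_sum n m S F \<in> carrier_mat n m"
  and mat_sum_dims[simp]: "dim_row (mat_sum n m S F) = n" "dim_col (mat_sum n m S F) = m"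
  by (auto simp: mat_sum_def)

lemma index_mat_sum[simp]: "r < n \<Longrightarrow> c < m \<Longrightarrow> mat_sum n m S F $$ (r,c)
  = (\<Sum>h\<in>S. F h $$ (r,c))"
  by (simp add: mat_sum_def)

lemma mat_sum_mult_left:
  assumes "A \<in> carrier_mat p n" "\<forall>h\<in>S. F h \<in> carrier_mat n m"
  shows "A * mat_sum n m S F = mat_sum p m S (\<lambda>h. A * F h)"
proof (rule eq_matI)
  fix r c assume rc: "r < dim_row (mat_sum p m S (\<lambda>h. A * F h))" "c < dim_col
    (mat_sum p m S (\<lambda>h. A * F h))"
  have "(A * mat_sum n m S F) $$ (r,c) = (\<Sum>k<n. A $$ (r,k) * (\<Sum>h\<in>S. F h $$ (k,c)))"
    using assms rc by (simp add: scalar_prod_def atLeast0LessThan row_def col_def)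
  also have "\<dots> = (\<Sum>h\<in>S. \<Sum>k<n. A $$ (r,k) * F h $$ (k,c))"
    by (simp add: sum_distrib_left sum.swap[of _ S])
  also have "\<dots> = mat_sum p m S (\<lambda>h. A * F h) $$ (r,c)"
    using rc by (auto intro!: sum.cong simp: index_mult_mat_lessThan[OF assms(1) bspec[OF assms(2)]])
  finally show "(A * mat_sum n m S F) $$ (r,c) = mat_sum p m S (\<lambda>h. A * F h) $$ (r,c)" .
qed (use assms in auto)

lemma mat_sum_mult_right:
  assumes "A \<in> carrier_mat m p" "\<forall>h\<in>S. F h \<in> carrier_mat n m"
  shows "mat_sum n m S F * A = mat_sum n p S (\<lambda>h. F h * A)"
proof (rule eq_matI)
  fix r c assume rc: "r < dim_row (mat_sum n p S (\<lambda>h. F h * A))" "c < dim_col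
    (mat_sum n p S (\<lambda>h. F h * A))"
  have "(mat_sum n m S F * A) $$ (r,c) = (\<Sum>k<m. (\<Sum>h\<in>S. F h $$ (r,k)) * A $$ (k,c))"
    using assms rc by (simp add: scalar_prod_def atLeast0LessThan row_def col_def)
  also have "\<dots> = (\<Sum>h\<in>S. \<Sum>k<m. F h $$ (r,k) * A $$ (k,c))"
    by (simp add: sum_distrib_right sum.swap[of _ S])
  also have "\<dots> = mat_sum n p S (\<lambda>h. F h * A) $$ (r,c)"
    using rc by (auto intro!: sum.cong simp: index_mult_mat_lessThan[OF bspec[OF assms(2)] assms(1)])
  finally show "(mat_sum n m S F * A) $$ (r,c) = mat_sum n p S (\<lambda>h. F h * A) $$ (r,c)" .
qed (use assms in auto)

lemma mat_sum_minus:
  assumes "\<forall>h\<in>S. F h \<in> carrier_mat n m" "\<forall>h\<in>S. G h \<in> carrier_mat n m"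
  shows "mat_sum n m S (\<lambda>h. F h - G h) = mat_sum n m S F - mat_sum n m S G"
  by (rule eq_matI) (auto simp: sum_subtractf[symmetric] intro!: sum.cong dest!: bspec[OF assms(1)] bspec[OF assms(2)])

lemma mat_sum_cong:
  assumes "\<And>h. h \<in> S \<Longrightarrow> F h = G h"
  shows "mat_sum n m S F = mat_sum n m S G"
  using assms by (simp add: mat_sum_def)

lemma sum_lessThan_delta:
  "(\<Sum>k<n. if k = c then (x::nat \<Rightarrow> 'a::comm_ring_1) k else 0) = (if c < n then x c else 0)"
proof -
  have "(\<Sum>k<n. if k = c then x k else 0) = (if c \<in> {..<n} then x c else 0)"
    by (rule sum.delta) simp
  then show ?thesis by simp
qed

lemma sum_lessThan_delta_right:
  "(\<Sum>k<n. (x::nat \<Rightarrow> 'a::comm_ring_1) k * (if k = c then 1 else 0)) = (if c < n then x c else 0)"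
proof -
  have "(\<Sum>k<n. x k * (if k = c then 1 else 0)) = (\<Sum>k<n. if k = c then x k else 0)"
    by (rule sum.cong) auto
  then show ?thesis by (simp only: sum_lessThan_delta)
qed

lemma sum_lessThan_delta_left:
  "(\<Sum>k<n. (if r = k then 1 else 0) * (x::nat \<Rightarrow> 'a::comm_ring_1) k) = (if r < n then x r else 0)"
proof -
  have "(\<Sum>k<n. (if r = k then 1 else 0) * x k) = (\<Sum>k<n. if k = r then x k else 0)"
    by (rule sum.cong) auto
  then show ?thesis by (simp only: sum_lessThan_delta)
qed

lemma sum_lessThan_delta_shift_left:
  "(\<Sum>k<N. (if k = r + n then 1 else 0) * (x::nat \<Rightarrow> 'a::comm_ring_1) k)
    = (if r + n < N then x (r + n) else 0)"
proof -
  have "(\<Sum>k<N. (if k = r + n then 1 else 0) * x k) = (\<Sum>k<N. if k = r + n then x k else 0)"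
    by (rule sum.cong) auto
  then show ?thesis by (simp only: sum_lessThan_delta)
qed

lemma sum_lessThan_delta_shift_right:
  "(\<Sum>k<m. (x::nat \<Rightarrow> 'a::comm_ring_1) k * (if c = k + n then 1 else 0))
    = (if n \<le> c \<and> c < n + m then x (c - n) else 0)"
proof (cases "n \<le> c")
  case True
  have "(\<Sum>k<m. x k * (if c = k + n then 1 else 0)) = (\<Sum>k<m. if k = c - n then x k else 0)"
    by (rule sum.cong) (use True in auto)
  then show ?thesis using True by (simp only: sum_lessThan_delta) auto
next
  case False
  have "(\<Sum>k<m. x k * (if c = k + n then 1 else 0)) = (\<Sum>k<m. 0)"
    by (rule sum.cong) (use False in auto)
  then show ?thesis using False by simp
qed

lemma sum_UNIV_fibres:
  "(\<Sum>i\<in>(UNIV::'i::finite set). \<Sum>h\<in>{h. t h = i}. F h i) = (\<Sum>h\<in>(UNIV::'a::finite set). F h (t h))"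
proof -
  have "(\<Sum>i\<in>(UNIV::'i set). \<Sum>h\<in>{h. t h = i}. F h i)
      = (\<Sum>i\<in>(UNIV::'i set). \<Sum>h\<in>(UNIV::'a set). if t h = i then F h i else 0)"
    by (rule sum.cong) (simp_all add: sum.If_cases)
  also have "\<dots> = (\<Sum>h\<in>(UNIV::'a set). \<Sum>i\<in>(UNIV::'i set). if t h = i then F h i else 0)"
    by (rule sum.swap)
  also have "\<dots> = (\<Sum>h\<in>(UNIV::'a set). F h (t h))" by simp
  finally show ?thesis .
qed

lemma sum_fun_apply: "finite S \<Longrightarrow> (sum f S) y = (\<Sum>x\<in>S. f x y)"
  by (induct rule: finite_induct) auto

lemma sum_UNIV_prod_bool: "(\<Sum>e\<in>(UNIV :: ('a::finite \<times> bool) set). G e)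
  = (\<Sum>h\<in>UNIV. G (h,True) + G (h,False))"
proof -
  have "(\<Sum>e\<in>(UNIV :: ('a \<times> bool) set). G e)
    = (\<Sum>e\<in>(UNIV :: 'a set) \<times> (UNIV :: bool set). G e)"
    by (simp add: UNIV_Times_UNIV)
  also have "\<dots> = (\<Sum>h\<in>UNIV. \<Sum>b\<in>UNIV. G (h,b))" by (rule sum.cartesian_product')
  also have "\<dots> = (\<Sum>h\<in>UNIV. G (h,True) + G (h,False))" by (simp add: UNIV_bool add.commute)
  finally show ?thesis .
qed

section \<open>Upper triangular block matrices\<close>

definition block_incl :: "nat \<Rightarrow> nat \<Rightarrow> 'a::comm_ring_1 mat" where
  "block_incl n m = mat (n + m) n (\<lambda>(r,c). if r = c then 1 else 0)"

definition block_proj1 :: "nat \<Rightarrow> nat \<Rightarrow> 'a::comm_ring_1 mat" where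
  "block_proj1 n m = mat n (n + m) (\<lambda>(r,c). if r = c then 1 else 0)"

definition block_proj2 :: "nat \<Rightarrow> nat \<Rightarrow> 'a::comm_ring_1 mat" where
  "block_proj2 n m = mat m (n + m) (\<lambda>(r,c). if c = r + n then 1 else 0)"

definition upper_block :: "'a::comm_ring_1 mat \<Rightarrow> 'a mat \<Rightarrow> 'a mat \<Rightarrow> 'a mat" where
  "upper_block A B D = four_block_mat A B (0\<^sub>m (dim_row D) (dim_col A)) D"

lemma block_incl_carrier[simp]: "block_incl n m \<in> carrier_mat (n + m) n"
  and block_proj1_carrier[simp]: "block_proj1 n m \<in> carrier_mat n (n + m)"
  and block_proj2_carrier[simp]: "block_proj2 n m \<in> carrier_mat m (n + m)"
  by (auto simp: block_incl_def block_proj1_def block_proj2_def)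

lemma upper_block_carrier: assumes "A \<in> carrier_mat n1 n2" "D \<in> carrier_mat m1 m2"
  shows "upper_block A B D \<in> carrier_mat (n1 + m1) (n2 + m2)"
  using carrier_matD[OF assms(1)] carrier_matD[OF assms(2)] unfolding upper_block_def carrier_mat_def by simp

lemma index_upper_block: assumes "A \<in> carrier_mat n1 n2" "B \<in> carrier_mat n1 m2" "D \<in> carrier_mat m1 m2"
  "r < n1 + m1" "c < n2 + m2"
  shows "upper_block A B D $$ (r,c) = (if r < n1 then if c < n2 then A $$ (r,c) else B $$ (r, c - n2)
     else if c < n2 then 0 else D $$ (r - n1, c - n2))"
  using carrier_matD[OF assms(1)] carrier_matD[OF assms(3)] assms(4,5) unfolding upper_block_def by simp

lemma upper_block_block_incl: assumes A: "A \<in> carrier_mat n1 n2" and B: "B \<in> carrier_mat n1 m2"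
  and D: "D \<in> carrier_mat m1 m2"
  shows "upper_block A B D * block_incl n2 m2 = block_incl n1 m1 * A"
proof (rule eq_matI)
  fix r c assume "r < dim_row (block_incl n1 m1 * A)" "c < dim_col (block_incl n1 m1 * A)"
  then have rc: "r < n1 + m1" "c < n2" by (simp_all only: index_mult_mat(2,3) carrier_matD[OF block_incl_carrier] carrier_matD[OF A])
  have "(upper_block A B D * block_incl n2 m2) $$ (r,c)
    = (\<Sum>k<n2+m2. upper_block A B D $$ (r,k) * (if k = c then 1 else 0))"
    by (subst index_mult_mat_lessThan[OF upper_block_carrier[OF A D] block_incl_carrier rc])
      (rule sum.cong, simp, use rc in \<open>simp add: block_incl_def\<close>)
  also have "\<dots> = upper_block A B D $$ (r,c)" using rc by (simp only: sum_lessThan_delta_right) simp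
  also have "\<dots> = (if r < n1 then A $$ (r,c) else 0)" using rc index_upper_block[OF A B D rc(1)] by simp
  also have "\<dots> = (\<Sum>k<n1. (if r = k then 1 else 0) * A $$ (k,c))" by (simp only: sum_lessThan_delta_left)
  also have "\<dots> = (block_incl n1 m1 * A) $$ (r,c)"
    by (subst index_mult_mat_lessThan[OF block_incl_carrier A rc])
      (rule sum.cong, simp, use rc in \<open>simp add: block_incl_def\<close>)
  finally show "(upper_block A B D * block_incl n2 m2) $$ (r,c) = (block_incl n1 m1 * A) $$ (r,c)" .
qed (simp_all only: index_mult_mat(2,3) carrier_matD[OF upper_block_carrier[OF A D]]
  carrier_matD[OF block_incl_carrier] carrier_matD[OF A])

lemma block_proj2_upper_block: assumes A: "A \<in> carrier_mat n1 n2" and B: "B \<in> carrier_mat n1 m2"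
  and D: "D \<in> carrier_mat m1 m2"
  shows "block_proj2 n1 m1 * upper_block A B D = D * block_proj2 n2 m2"
proof (rule eq_matI)
  fix r c assume "r < dim_row (D * block_proj2 n2 m2)" "c < dim_col (D * block_proj2 n2 m2)"
  then have rc: "r < m1" "c < n2 + m2" by (simp_all only: index_mult_mat(2,3) carrier_matD[OF block_proj2_carrier] carrier_matD[OF D])
  have "(block_proj2 n1 m1 * upper_block A B D) $$ (r,c)
    = (\<Sum>k<n1+m1. (if k = r + n1 then 1 else 0) * upper_block A B D $$ (k,c))"
    by (subst index_mult_mat_lessThan[OF block_proj2_carrier upper_block_carrier[OF A D] rc])
      (rule sum.cong, simp, use rc in \<open>auto simp: block_proj2_def\<close>)
  also have "\<dots> = upper_block A B D $$ (r + n1, c)" using rc by (simp only: sum_lessThan_delta_shift_left) simp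
  also have "\<dots> = (if n2 \<le> c \<and> c < n2 + m2 then D $$ (r, c - n2) else 0)"
    using rc index_upper_block[OF A B D _ rc(2), of "r + n1"] by simp
  also have "\<dots> = (\<Sum>k<m2. D $$ (r,k) * (if c = k + n2 then 1 else 0))"
    by (simp only: sum_lessThan_delta_shift_right)
  also have "\<dots> = (D * block_proj2 n2 m2) $$ (r,c)"
    by (subst index_mult_mat_lessThan[OF D block_proj2_carrier rc])
      (rule sum.cong, simp, use rc in \<open>simp add: block_proj2_def\<close>)
  finally show "(block_proj2 n1 m1 * upper_block A B D) $$ (r,c) = (D * block_proj2 n2 m2) $$ (r,c)" .
qed (simp_all only: index_mult_mat(2,3) carrier_matD[OF upper_block_carrier[OF A D]]
  carrier_matD[OF block_proj2_carrier] carrier_matD[OF D])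

lemma block_proj1_upper_block: assumes A: "A \<in> carrier_mat n1 n2" and B: "B \<in> carrier_mat n1 m2"
  and D: "D \<in> carrier_mat m1 m2"
  shows "block_proj1 n1 m1 * upper_block A B D = A * block_proj1 n2 m2 + B * block_proj2 n2 m2"
proof (rule eq_matI)
  fix r c assume "r < dim_row (A * block_proj1 n2 m2 + B * block_proj2 n2 m2)" "c < dim_col
    (A * block_proj1 n2 m2 + B * block_proj2 n2 m2)"
  then have rc: "r < n1" "c < n2 + m2"
    by (simp_all only: index_add_mat(2,3) index_mult_mat(2,3) carrier_matD[OF block_proj2_carrier] carrier_matD[OF B])
  have rc': "r < n1 + m1" using rc by simp
  have "(block_proj1 n1 m1 * upper_block A B D) $$ (r,c)
    = (\<Sum>k<n1+m1. (if r = k then 1 else 0) * upper_block A B D $$ (k,c))"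
    by (subst index_mult_mat_lessThan[OF block_proj1_carrier upper_block_carrier[OF A D] rc(1) rc(2)])
      (rule sum.cong, simp, use rc in \<open>auto simp: block_proj1_def\<close>)
  also have "\<dots> = upper_block A B D $$ (r, c)" using rc by (simp only: sum_lessThan_delta_left) simp
  also have "\<dots> = (if c < n2 then A $$ (r, c) else 0) + (if n2 \<le> c \<and> c < n2 + m2 then B $$ (r, c - n2) else 0)"
    using rc index_upper_block[OF A B D rc' rc(2)] by simp
  also have "\<dots> = (\<Sum>k<n2. A $$ (r,k) * (if k = c then 1 else 0))
    + (\<Sum>k<m2. B $$ (r,k) * (if c = k + n2 then 1 else 0))"
    by (simp only: sum_lessThan_delta_right sum_lessThan_delta_shift_right)
  also have "\<dots> = (A * block_proj1 n2 m2) $$ (r,c) + (B * block_proj2 n2 m2) $$ (r,c)"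
    by (subst index_mult_mat_lessThan[OF A block_proj1_carrier rc], subst
      index_mult_mat_lessThan[OF B block_proj2_carrier rc])
      (intro arg_cong2[where f = plus]; rule sum.cong, simp, use rc in \<open>simp add: block_proj1_def
        block_proj2_def\<close>)
  also have "\<dots> = (A * block_proj1 n2 m2 + B * block_proj2 n2 m2) $$ (r,c)"
    by (rule index_add_mat(1)[symmetric])
      (simp_all only: index_mult_mat(2,3) carrier_matD[OF B] carrier_matD[OF block_proj2_carrier] rc)
  finally show "(block_proj1 n1 m1 * upper_block A B D) $$ (r,c)
    = (A * block_proj1 n2 m2 + B * block_proj2 n2 m2) $$ (r,c)" .
qed (simp_all only: index_add_mat(2,3) index_mult_mat(2,3) carrier_matD[OF upper_block_carrier[OF A D]]
  carrier_matD[OF block_proj1_carrier]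
  carrier_matD[OF block_proj2_carrier] carrier_matD[OF A] carrier_matD[OF B])

lemma block_incl_vec: "u \<in> carrier_vec n \<Longrightarrow> block_incl n m *\<^sub>v u
  = vec (n + m) (\<lambda>r. if r < n then u $ r else (0::'a::comm_ring_1))"
proof (rule eq_vecI)
  fix r assume u: "u \<in> carrier_vec n" and "r < dim_vec (vec (n + m) (\<lambda>r. if r < n then u $ r else (0::'a)))"
  then have r: "r < n + m" by simp
  have "(block_incl n m *\<^sub>v u) $ r = (\<Sum>k<n. (if r = k then 1 else 0) * u $ k)"
    using r u by (simp add: block_incl_def scalar_prod_def atLeast0LessThan row_def)
  also have "\<dots> = (if r < n then u $ r else 0)" by (simp only: sum_lessThan_delta_left)
  finally show "(block_incl n m *\<^sub>v u) $ r = vec (n + m) (\<lambda>r. if r < n then u $ r else 0) $ r"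
    using r by simp
qed (simp add: block_incl_def)

lemma block_proj2_vec: "v \<in> carrier_vec (n + m) \<Longrightarrow> block_proj2 n m *\<^sub>v v
  = vec m (\<lambda>r. v $ (r + n) :: 'a::comm_ring_1)"
proof (rule eq_vecI)
  fix r assume v: "v \<in> carrier_vec (n + m)" and "r < dim_vec (vec m (\<lambda>r. v $ (r + n) :: 'a))"
  then have r: "r < m" by simp
  have "(block_proj2 n m *\<^sub>v v) $ r = (\<Sum>k<n+m. (if k = r + n then 1 else 0) * v $ k)"
    using r v by (simp add: block_proj2_def scalar_prod_def atLeast0LessThan row_def)
  also have "\<dots> = v $ (r + n)" using r by (simp only: sum_lessThan_delta_shift_left) simp
  finally show "(block_proj2 n m *\<^sub>v v) $ r = vec m (\<lambda>r. v $ (r + n)) $ r" using r by simp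
qed (simp add: block_proj2_def)

lemma block_incl_inj:
  assumes u: "u \<in> carrier_vec n" and zero: "block_incl n m *\<^sub>v u = (0\<^sub>v (n + m) :: 'a::comm_ring_1 vec)"
  shows "u = 0\<^sub>v n"
proof (rule eq_vecI)
  fix r assume "r < dim_vec (0\<^sub>v n :: 'a vec)"
  then have r: "r < n" by simp
  have "(block_incl n m *\<^sub>v u) $ r = u $ r" unfolding block_incl_vec[OF u] using r by simp
  then show "u $ r = 0\<^sub>v n $ r" using zero r by simp
qed (use u in simp)

lemma block_proj2_kernel:
  assumes v: "v \<in> carrier_vec (n + m)"
  shows "block_proj2 n m *\<^sub>v v = (0\<^sub>v m :: 'a::comm_ring_1 vec)
    \<longleftrightarrow> (\<exists>u \<in> carrier_vec n. block_incl n m *\<^sub>v u = v)"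
proof
  assume proj_zero: "block_proj2 n m *\<^sub>v v = 0\<^sub>v m"
  have high_zero: "v $ r = 0" if "n \<le> r" "r < n + m" for r
  proof -
    have "r - n + n = r" using that by simp
    then have "(block_proj2 n m *\<^sub>v v) $ (r - n) = v $ r" unfolding block_proj2_vec[OF v] using that by simp
    then show ?thesis using proj_zero that by simp
  qed
  have "block_incl n m *\<^sub>v vec n (\<lambda>r. v $ r) = v"
    by (subst block_incl_vec) (use v high_zero in \<open>auto intro!: eq_vecI\<close>)
  then show "\<exists>u \<in> carrier_vec n. block_incl n m *\<^sub>v u = v"
    by (intro bexI[of _ "vec n (\<lambda>r. v $ r)"]) auto
next
  assume "\<exists>u \<in> carrier_vec n. block_incl n m *\<^sub>v u = v"
  then obtain u where u: "u \<in> carrier_vec n" "block_incl n m *\<^sub>v u = v" by blast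
  have v_eq: "v = vec (n + m) (\<lambda>r. if r < n then u $ r else 0)"
    using u(2) unfolding block_incl_vec[OF u(1)] by simp
  show "block_proj2 n m *\<^sub>v v = 0\<^sub>v m"
    unfolding block_proj2_vec[OF v] using v_eq by (intro eq_vecI) auto
qed

lemma block_proj2_surj:
  assumes w: "w \<in> carrier_vec m"
  shows "\<exists>v \<in> carrier_vec (n + m). block_proj2 n m *\<^sub>v v = (w :: 'a::comm_ring_1 vec)"
proof
  let ?v = "vec (n + m) (\<lambda>r. if r < n then 0 else w $ (r - n))"
  show "block_proj2 n m *\<^sub>v ?v = w" by (subst block_proj2_vec) (use w in \<open>auto intro!: eq_vecI\<close>)
qed simp

lemma upper_block_mult:
  fixes A1 :: "'a::comm_ring_1 mat"
  assumes A1: "A1 \<in> carrier_mat n1 n2" and B1: "B1 \<in> carrier_mat n1 m2" and D1: "D1 \<in> carrier_mat m1 m2"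
    and A2: "A2 \<in> carrier_mat n2 n3" and B2: "B2 \<in> carrier_mat n2 m3" and D2: "D2 \<in> carrier_mat m2 m3"
  shows "upper_block A1 B1 D1 * upper_block A2 B2 D2 = upper_block (A1 * A2) (A1 * B2 + B1 * D2) (D1 * D2)"
proof -
  have e1: "upper_block A1 B1 D1 = four_block_mat A1 B1 (0\<^sub>m m1 n2) D1"
    unfolding upper_block_def using carrier_matD[OF D1] carrier_matD[OF A1] by simp
  have e2: "upper_block A2 B2 D2 = four_block_mat A2 B2 (0\<^sub>m m2 n3) D2"
    unfolding upper_block_def using carrier_matD[OF D2] carrier_matD[OF A2] by simp
  have e3: "upper_block (A1 * A2) (A1 * B2 + B1 * D2) (D1 * D2)
    = four_block_mat (A1 * A2) (A1 * B2 + B1 * D2) (0\<^sub>m m1 n3) (D1 * D2)"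
    unfolding upper_block_def using carrier_matD[OF D1] carrier_matD[OF A2] by simp
  have z1: "A1 * A2 + B1 * 0\<^sub>m m2 n3 = A1 * A2"
    unfolding right_mult_zero_mat[OF B1] by (rule right_add_zero_mat[OF mult_carrier_mat[OF A1 A2]])
  have z2: "0\<^sub>m m1 n2 * A2 + D1 * 0\<^sub>m m2 n3 = 0\<^sub>m m1 n3"
    unfolding left_mult_zero_mat[OF A2] right_mult_zero_mat[OF D1] by (rule left_add_zero_mat[OF zero_carrier_mat])
  have z3: "0\<^sub>m m1 n2 * B2 + D1 * D2 = D1 * D2"
    unfolding left_mult_zero_mat[OF B2] by (rule left_add_zero_mat[OF mult_carrier_mat[OF D1 D2]])
  show ?thesis unfolding e1 e2 e3 mult_four_block_mat[OF A1 B1 zero_carrier_mat D1 A2 B2 zero_carrier_mat D2]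
    z1 z2 z3 ..
qed

lemma mat_sum_upper_block: fixes A :: "'h \<Rightarrow> 'a::comm_ring_1 mat"
  assumes A: "\<And>h. h \<in> S \<Longrightarrow> A h \<in> carrier_mat n1 n2" and B: "\<And>h. h \<in> S
    \<Longrightarrow> B h \<in> carrier_mat n1 m2"
    and D: "\<And>h. h \<in> S \<Longrightarrow> D h \<in> carrier_mat m1 m2"
  shows "mat_sum (n1 + m1) (n2 + m2) S (\<lambda>h. upper_block (A h) (B h) (D h))
    = upper_block (mat_sum n1 n2 S A) (mat_sum n1 m2 S B) (mat_sum m1 m2 S D)"
proof (rule eq_matI)
  fix r c assume "r < dim_row (upper_block (mat_sum n1 n2 S A) (mat_sum n1 m2 S B) (mat_sum m1 m2 S D))"
    "c < dim_col (upper_block (mat_sum n1 n2 S A) (mat_sum n1 m2 S B) (mat_sum m1 m2 S D))"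
  then have rc: "r < n1 + m1" "c < n2 + m2"
    by (simp_all add: carrier_matD[OF upper_block_carrier[OF mat_sum_carrier mat_sum_carrier]])
  have "mat_sum (n1 + m1) (n2 + m2) S (\<lambda>h. upper_block (A h) (B h) (D h)) $$ (r,c) =
     (\<Sum>h\<in>S. if r < n1 then if c < n2 then A h $$ (r,c) else B h $$ (r, c - n2)
       else if c < n2 then 0 else D h $$ (r - n1, c - n2))"
    unfolding index_mat_sum[OF rc] by (rule sum.cong) (simp_all add: index_upper_block[OF A B D rc])
  also have "\<dots> = (if r < n1 then if c < n2 then (\<Sum>h\<in>S. A h $$ (r,c)) else
    (\<Sum>h\<in>S. B h $$ (r, c - n2))
       else if c < n2 then 0 else (\<Sum>h\<in>S. D h $$ (r - n1, c - n2)))"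
    by simp
  also have "\<dots> = upper_block (mat_sum n1 n2 S A) (mat_sum n1 m2 S B) (mat_sum m1 m2 S D) $$ (r,c)"
    using rc by (simp add: index_upper_block[OF mat_sum_carrier mat_sum_carrier mat_sum_carrier rc])
  finally show "mat_sum (n1 + m1) (n2 + m2) S (\<lambda>h. upper_block (A h) (B h) (D h)) $$ (r,c) =
     upper_block (mat_sum n1 n2 S A) (mat_sum n1 m2 S B) (mat_sum m1 m2 S D) $$ (r,c)" .
qed (simp_all add: carrier_matD[OF upper_block_carrier[OF mat_sum_carrier mat_sum_carrier]])

lemma upper_block_minus:
  fixes A :: "'a::comm_ring_1 mat"
  assumes A: "A \<in> carrier_mat n1 n2" and B: "B \<in> carrier_mat n1 m2" and D: "D \<in> carrier_mat m1 m2"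
    and A': "A' \<in> carrier_mat n1 n2" and B': "B' \<in> carrier_mat n1 m2" and D': "D' \<in> carrier_mat m1 m2"
  shows "upper_block A B D - upper_block A' B' D' = upper_block (A - A') (B - B') (D - D')"
proof (rule eq_matI)
  have c: "upper_block (A - A') (B - B') (D - D') \<in> carrier_mat (n1 + m1) (n2 + m2)"
    by (rule upper_block_carrier[OF minus_carrier_mat[OF A'] minus_carrier_mat[OF D']])
  fix r c assume "r < dim_row (upper_block (A - A') (B - B') (D - D'))" "c < dim_col
    (upper_block (A - A') (B - B') (D - D'))"
  then have rc: "r < n1 + m1" "c < n2 + m2" using carrier_matD[OF c] by simp_all
  show "(upper_block A B D - upper_block A' B' D') $$ (r,c) = upper_block (A - A') (B - B') (D - D') $$ (r,c)"
    using rc carrier_matD[OF upper_block_carrier[OF A' D']]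
    by (simp add: index_upper_block[OF A B D rc] index_upper_block[OF A' B' D' rc]
      index_upper_block[OF minus_carrier_mat[OF A'] minus_carrier_mat[OF B'] minus_carrier_mat[OF D'] rc]
      carrier_matD[OF A'] carrier_matD[OF B'] carrier_matD[OF D'])
qed (use carrier_matD[OF upper_block_carrier[OF minus_carrier_mat[OF A'] minus_carrier_mat[OF D']]]
   carrier_matD[OF upper_block_carrier[OF A' D']] in simp_all)

lemma upper_block_zero: "upper_block (0\<^sub>m n1 n2 :: 'a::comm_ring_1 mat) (0\<^sub>m n1 m2)
  (0\<^sub>m m1 m2) = 0\<^sub>m (n1 + m1) (n2 + m2)"
  unfolding upper_block_def by simp

definition mat_trace :: "'a::comm_ring_1 mat \<Rightarrow> 'a" where
  "mat_trace A = (\<Sum>i<dim_row A. A $$ (i,i))"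

lemma mat_trace_add: "A \<in> carrier_mat n n \<Longrightarrow> B \<in> carrier_mat n n
  \<Longrightarrow> mat_trace (A + B) = mat_trace A + mat_trace B"
  unfolding mat_trace_def by (simp add: sum.distrib)

lemma mat_trace_minus: "A \<in> carrier_mat n n \<Longrightarrow> B \<in> carrier_mat n n
  \<Longrightarrow> mat_trace (A - B) = mat_trace A - mat_trace B"
  unfolding mat_trace_def by (simp add: sum_subtractf)

lemma mat_trace_mult: "A \<in> carrier_mat n m \<Longrightarrow> B \<in> carrier_mat m n \<Longrightarrow>
  mat_trace (A * B) = (\<Sum>i<n. \<Sum>j<m. A $$ (i,j) * B $$ (j,i))"
proof -
  assume A: "A \<in> carrier_mat n m" and B: "B \<in> carrier_mat m n"
  have "mat_trace (A * B) = (\<Sum>i<n. (A * B) $$ (i,i))" unfolding mat_trace_def using A by simp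
  also have "\<dots> = (\<Sum>i<n. \<Sum>j<m. A $$ (i,j) * B $$ (j,i))"
    by (rule sum.cong) (simp_all add: index_mult_mat_lessThan[OF A B])
  finally show ?thesis .
qed

lemma mat_trace_mult_comm: assumes "A \<in> carrier_mat n m" "B \<in> carrier_mat m n" shows "mat_trace (A * B)
  = mat_trace (B * A)"
proof -
  have "mat_trace (A * B) = (\<Sum>i<n. \<Sum>j<m. A $$ (i,j) * B $$ (j,i))" by (rule mat_trace_mult[OF assms])
  also have "\<dots> = (\<Sum>j<m. \<Sum>i<n. B $$ (j,i) * A $$ (i,j))" by (subst sum.swap) (simp add: mult.commute)
  also have "\<dots> = mat_trace (B * A)" by (rule mat_trace_mult[OF assms(2,1), symmetric])
  finally show ?thesis .
qed

lemma mat_trace_mat_sum: assumes "\<forall>h\<in>S. F h \<in> carrier_mat n n"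
  shows "mat_trace (mat_sum n n S F) = (\<Sum>h\<in>S. mat_trace (F h))"
proof -
  have "mat_trace (mat_sum n n S F) = (\<Sum>i<n. \<Sum>h\<in>S. F h $$ (i,i))" unfolding mat_trace_def by simp
  also have "\<dots> = (\<Sum>h\<in>S. \<Sum>i<n. F h $$ (i,i))" by (rule sum.swap)
  also have "\<dots> = (\<Sum>h\<in>S. mat_trace (F h))" unfolding mat_trace_def by (rule sum.cong) (use assms in auto)
  finally show ?thesis .
qed

lemma mat_trace_adjoint_identity:
  fixes St :: "'a::comm_ring_1 mat"
  assumes St: "St \<in> carrier_mat n1 m1" and Ss: "Ss \<in> carrier_mat n2 m2"
    and MT: "MT \<in> carrier_mat m1 m2" and NT: "NT \<in> carrier_mat n1 n2"
    and MF: "MF \<in> carrier_mat m2 m1" and NF: "NF \<in> carrier_mat n2 n1"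
    and PF: "PF \<in> carrier_mat m2 n1" and PT: "PT \<in> carrier_mat m1 n2"
  shows "mat_trace ((St * MT - NT * Ss) * PF) - mat_trace ((Ss * MF - NF * St) * PT)
       = mat_trace (St * (MT * PF + PT * NF)) - mat_trace (Ss * (MF * PT + PF * NT))"
proof -
  have 1: "mat_trace ((St * MT - NT * Ss) * PF) = mat_trace (St * (MT * PF)) - mat_trace (Ss * (PF * NT))"
  proof -
    have "(St * MT - NT * Ss) * PF = St * (MT * PF) - NT * (Ss * PF)"
      by (simp add: minus_mult_distrib_mat[OF mult_carrier_mat[OF St MT] mult_carrier_mat[OF NT Ss] PF]
          assoc_mult_mat[OF St MT PF] assoc_mult_mat[OF NT Ss PF])
    then have "mat_trace ((St * MT - NT * Ss) * PF) = mat_trace (St * (MT * PF)) - mat_trace (NT * (Ss * PF))"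
      using mat_trace_minus[OF mult_carrier_mat[OF St mult_carrier_mat[OF MT PF]]
        mult_carrier_mat[OF NT mult_carrier_mat[OF Ss PF]]]
      by simp
    also have "mat_trace (NT * (Ss * PF)) = mat_trace ((Ss * PF) * NT)"
      by (rule mat_trace_mult_comm[OF NT mult_carrier_mat[OF Ss PF]])
    also have "\<dots> = mat_trace (Ss * (PF * NT))" by (simp add: assoc_mult_mat[OF Ss PF NT])
    finally show ?thesis .
  qed
  have 2: "mat_trace ((Ss * MF - NF * St) * PT) = mat_trace (Ss * (MF * PT)) - mat_trace (St * (PT * NF))"
  proof -
    have "(Ss * MF - NF * St) * PT = Ss * (MF * PT) - NF * (St * PT)"
      by (simp add: minus_mult_distrib_mat[OF mult_carrier_mat[OF Ss MF] mult_carrier_mat[OF NF St] PT]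
          assoc_mult_mat[OF Ss MF PT] assoc_mult_mat[OF NF St PT])
    then have "mat_trace ((Ss * MF - NF * St) * PT) = mat_trace (Ss * (MF * PT)) - mat_trace (NF * (St * PT))"
      using mat_trace_minus[OF mult_carrier_mat[OF Ss mult_carrier_mat[OF MF PT]]
        mult_carrier_mat[OF NF mult_carrier_mat[OF St PT]]]
      by simp
    also have "mat_trace (NF * (St * PT)) = mat_trace ((St * PT) * NF)"
      by (rule mat_trace_mult_comm[OF NF mult_carrier_mat[OF St PT]])
    also have "\<dots> = mat_trace (St * (PT * NF))" by (simp add: assoc_mult_mat[OF St PT NF])
    finally show ?thesis .
  qed
  have 3: "mat_trace (St * (MT * PF + PT * NF)) = mat_trace (St * (MT * PF)) + mat_trace (St * (PT * NF))"
    by (simp add: mult_add_distrib_mat[OF St mult_carrier_mat[OF MT PF] mult_carrier_mat[OF PT NF]]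
        mat_trace_add[OF mult_carrier_mat[OF St mult_carrier_mat[OF MT PF]]
          mult_carrier_mat[OF St mult_carrier_mat[OF PT NF]]])
  have 4: "mat_trace (Ss * (MF * PT + PF * NT)) = mat_trace (Ss * (MF * PT)) + mat_trace (Ss * (PF * NT))"
    by (simp add: mult_add_distrib_mat[OF Ss mult_carrier_mat[OF MF PT] mult_carrier_mat[OF PF NT]]
        mat_trace_add[OF mult_carrier_mat[OF Ss mult_carrier_mat[OF MF PT]]
          mult_carrier_mat[OF Ss mult_carrier_mat[OF PF NT]]])
  show ?thesis unfolding 1 2 3 4 by (simp add: algebra_simps)
qed

section \<open>The complex computing Hom and \<open>Ext\<^sup>1\<close>\<close>

locale quiver =
  fixes src tgt :: "'a::finite \<Rightarrow> 'i::finite"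
begin

abbreviation "ds \<equiv> dsrc src tgt"

abbreviation "dt \<equiv> dtgt src tgt"

lemma ds_dt_simps[simp]: "ds (h,True) = src h" "dt (h,True) = tgt h"
  "ds (h,False) = tgt h" "dt (h,False) = src h"
  by (auto simp: dsrc_def dtgt_def)

definition is_rep :: "('i,'a,'k::field) pirep \<Rightarrow> bool" where
  "is_rep M \<longleftrightarrow> (\<forall>e. mp M e \<in> carrier_mat (dimv M (dt e)) (dimv M (ds e)))"

lemma is_repD[simp]: "is_rep M \<Longrightarrow> mp M (h,True) \<in> carrier_mat (dimv M (tgt h)) (dimv M (src h))"
  "is_rep M \<Longrightarrow> mp M (h,False) \<in> carrier_mat (dimv M (src h)) (dimv M (tgt h))"
  "is_rep M \<Longrightarrow> mp M e \<in> carrier_mat (dimv M (dt e)) (dimv M (ds e))"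
  unfolding is_rep_def by (metis ds_dt_simps)+

definition preproj_rel :: "('i,'a,'k::field) pirep \<Rightarrow> 'i \<Rightarrow> 'k mat" where
  "preproj_rel M i = mat_sum (dimv M i) (dimv M i) {h. tgt h = i} (\<lambda>h. mp M (h,True) * mp M (h,False))
     - mat_sum (dimv M i) (dimv M i) {h. src h = i} (\<lambda>h. mp M (h,False) * mp M (h,True))"

lemma pi_module_iff: "pi_module src tgt M \<longleftrightarrow> is_rep M
  \<and> (\<forall>i. preproj_rel M i = 0\<^sub>m (dimv M i) (dimv M i))"
proof -
  have "preproj_rel M i = 0\<^sub>m (dimv M i) (dimv M i)
    \<longleftrightarrow> (\<forall>r < dimv M i. \<forall>c < dimv M i.
        (\<Sum>h\<in>{h. tgt h = i}. (mp M (h, True) * mp M (h, False)) $$ (r, c))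
      - (\<Sum>h\<in>{h. src h = i}. (mp M (h, False) * mp M (h, True)) $$ (r, c)) = 0)" for i
    unfolding preproj_rel_def by (auto simp: mat_eq_iff)
  then show ?thesis unfolding pi_module_def is_rep_def by auto
qed

definition cochain0 :: "('i,'a,'k::field) pirep \<Rightarrow> ('i,'a,'k) pirep \<Rightarrow>
  ('i \<Rightarrow> 'k mat) \<Rightarrow> bool" where
  "cochain0 M N \<sigma> \<longleftrightarrow> (\<forall>i. \<sigma> i \<in> carrier_mat (dimv N i) (dimv M i))"

definition cochain1 :: "('i,'a,'k::field) pirep \<Rightarrow> ('i,'a,'k) pirep \<Rightarrow>
  ('a \<times> bool \<Rightarrow> 'k mat) \<Rightarrow> bool" where
  "cochain1 M N \<phi> \<longleftrightarrow> (\<forall>e. \<phi> e \<in> carrier_mat (dimv N (dt e)) (dimv M (ds e)))"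

definition d0 :: "('i,'a,'k::field) pirep \<Rightarrow> ('i,'a,'k) pirep \<Rightarrow>
  ('i \<Rightarrow> 'k mat) \<Rightarrow> 'a \<times> bool \<Rightarrow> 'k mat" where
  "d0 M N \<sigma> e = \<sigma> (dt e) * mp M e - mp N e * \<sigma> (ds e)"

definition d1 :: "('i,'a,'k::field) pirep \<Rightarrow> ('i,'a,'k) pirep \<Rightarrow>
  ('a \<times> bool \<Rightarrow> 'k mat) \<Rightarrow> 'i \<Rightarrow> 'k mat" where
  "d1 M N \<phi> i = mat_sum (dimv N i) (dimv M i) {h. tgt h = i}
    (\<lambda>h. mp N (h,True) * \<phi> (h,False) + \<phi> (h,True) * mp M (h,False))
     - mat_sum (dimv N i) (dimv M i) {h. src h = i}
       (\<lambda>h. mp N (h,False) * \<phi> (h,True) + \<phi> (h,False) * mp M (h,True))"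

definition cocycle :: "('i,'a,'k::field) pirep \<Rightarrow> ('i,'a,'k) pirep \<Rightarrow>
  ('a \<times> bool \<Rightarrow> 'k mat) \<Rightarrow> bool" where
  "cocycle M N \<phi> \<longleftrightarrow> cochain1 M N \<phi>
    \<and> (\<forall>i. d1 M N \<phi> i = 0\<^sub>m (dimv N i) (dimv M i))"

definition H1_zero :: "('i,'a,'k::field) pirep \<Rightarrow> ('i,'a,'k) pirep \<Rightarrow> bool" where
  "H1_zero M N \<longleftrightarrow> (\<forall>\<phi>. cocycle M N \<phi> \<longrightarrow> (\<exists>\<sigma>. cochain0 M N \<sigma> \<and> d0 M N \<sigma> = \<phi>))"

lemma cochain0D: "cochain0 M N \<sigma> \<Longrightarrow> \<sigma> i \<in> carrier_mat (dimv N i) (dimv M i)"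
  by (simp add: cochain0_def)

lemma cochain1D: "cochain1 M N \<phi> \<Longrightarrow> \<phi> e \<in> carrier_mat (dimv N (dt e)) (dimv M (ds e))"
  "cochain1 M N \<phi> \<Longrightarrow> \<phi> (h,True) \<in> carrier_mat (dimv N (tgt h)) (dimv M (src h))"
  "cochain1 M N \<phi> \<Longrightarrow> \<phi> (h,False) \<in> carrier_mat (dimv N (src h)) (dimv M (tgt h))"
  unfolding cochain1_def by (metis ds_dt_simps)+

lemma d0_cochain1: "is_rep M \<Longrightarrow> is_rep N \<Longrightarrow> cochain0 M N \<sigma>
  \<Longrightarrow> cochain1 M N (d0 M N \<sigma>)"
  unfolding cochain1_def d0_def using cochain0D is_repD(3) by (metis minus_carrier_mat mult_carrier_mat)

lemma d1_carrier: "d1 M N \<phi> i \<in> carrier_mat (dimv N i) (dimv M i)"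
  unfolding d1_def by (rule minus_carrier_mat) simp

lemma d0_eq_zero_iff: "is_rep M \<Longrightarrow> is_rep N \<Longrightarrow> cochain0 M N u \<Longrightarrow>
  (d0 M N u e = 0\<^sub>m (dimv N (dt e)) (dimv M (ds e))) = (u (dt e) * mp M e = mp N e * u (ds e))"
  unfolding d0_def
  by (rule mat_diff_eq_zero_iff) (auto intro: mult_carrier_mat[OF cochain0D is_repD(3)] mult_carrier_mat[OF is_repD(3) cochain0D])

lemma pi_hom_iff_d0: "is_rep M \<Longrightarrow> is_rep N \<Longrightarrow> pi_hom src tgt M N u \<longleftrightarrow>
   cochain0 M N u \<and> (\<forall>e. d0 M N u e = 0\<^sub>m (dimv N (dt e)) (dimv M (ds e)))"
  using d0_eq_zero_iff unfolding pi_hom_def cochain0_def by blast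

lemma pi_homD: "pi_hom src tgt M N u \<Longrightarrow> cochain0 M N u"
  "pi_hom src tgt M N u \<Longrightarrow> u (dt e) * mp M e = mp N e * u (ds e)"
  "pi_hom src tgt M N u \<Longrightarrow> u (tgt h) * mp M (h,True) = mp N (h,True) * u (src h)"
  "pi_hom src tgt M N u \<Longrightarrow> u (src h) * mp M (h,False) = mp N (h,False) * u (tgt h)"
  unfolding pi_hom_def cochain0_def by (metis ds_dt_simps)+

lemma d0_minus: assumes "is_rep M" "is_rep N" "cochain0 M N \<sigma>" "cochain0 M N \<tau>"
  shows "d0 M N (\<lambda>i. \<sigma> i - \<tau> i) e = d0 M N \<sigma> e - d0 M N \<tau> e"
proof -
  note c = is_repD(3)[OF assms(1), of e] is_repD(3)[OF assms(2), of e] cochain0D[OF assms(3)] cochain0D[OF assms(4)]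
  have 1: "(\<sigma> (dt e) - \<tau> (dt e)) * mp M e = \<sigma> (dt e) * mp M e - \<tau> (dt e) * mp M e"
    by (rule minus_mult_distrib_mat[OF c(3) c(4) c(1)])
  have 2: "mp N e * (\<sigma> (ds e) - \<tau> (ds e)) = mp N e * \<sigma> (ds e) - mp N e * \<tau> (ds e)"
    by (rule mult_minus_distrib_mat[OF c(2) c(3) c(4)])
  show ?thesis unfolding d0_def 1 2
    by (rule mat_diff_diff_commute) (auto intro: mult_carrier_mat[OF c(3) c(1)] mult_carrier_mat[OF c(4) c(1)]
        mult_carrier_mat[OF c(2) c(3)] mult_carrier_mat[OF c(2) c(4)])
qed

lemma d0_add: assumes "is_rep M" "is_rep N" "cochain0 M N \<sigma>" "cochain0 M N \<tau>"
  shows "d0 M N (\<lambda>i. \<sigma> i + \<tau> i) e = d0 M N \<sigma> e + d0 M N \<tau> e"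
proof -
  note c = is_repD(3)[OF assms(1), of e] is_repD(3)[OF assms(2), of e] cochain0D[OF assms(3)] cochain0D[OF assms(4)]
  have 1: "(\<sigma> (dt e) + \<tau> (dt e)) * mp M e = \<sigma> (dt e) * mp M e + \<tau> (dt e) * mp M e"
    by (rule add_mult_distrib_mat[OF c(3) c(4) c(1)])
  have 2: "mp N e * (\<sigma> (ds e) + \<tau> (ds e)) = mp N e * \<sigma> (ds e) + mp N e * \<tau> (ds e)"
    by (rule mult_add_distrib_mat[OF c(2) c(3) c(4)])
  show ?thesis unfolding d0_def 1 2
    by (rule mat_add_diff_add) (auto intro: mult_carrier_mat[OF c(3) c(1)] mult_carrier_mat[OF c(4) c(1)]
        mult_carrier_mat[OF c(2) c(3)] mult_carrier_mat[OF c(2) c(4)])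
qed

lemma d0_comp_left: assumes "is_rep M" "is_rep N" "is_rep N'" "cochain0 M N \<sigma>" "pi_hom src tgt N N' u"
  shows "d0 M N' (\<lambda>i. u i * \<sigma> i) e = u (dt e) * d0 M N \<sigma> e"
proof -
  note Me = is_repD(3)[OF assms(1), of e] and Ne = is_repD(3)[OF assms(2), of e]
    and N'e = is_repD(3)[OF assms(3), of e] and s = cochain0D[OF assms(4)] and uc = cochain0D[OF pi_homD(1)[OF assms(5)]]
  have "u (dt e) * d0 M N \<sigma> e = u (dt e) * (\<sigma> (dt e) * mp M e) - u (dt e) * (mp N e * \<sigma> (ds e))"
    unfolding d0_def by (rule mult_minus_distrib_mat[OF uc mult_carrier_mat[OF s Me] mult_carrier_mat[OF Ne s]])
  also have "\<dots> = (u (dt e) * \<sigma> (dt e)) * mp M e - (u (dt e) * mp N e) * \<sigma> (ds e)"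
    by (simp add: assoc_mult_mat[OF uc s Me] assoc_mult_mat[OF uc Ne s])
  also have "\<dots> = (u (dt e) * \<sigma> (dt e)) * mp M e - (mp N' e * u (ds e)) * \<sigma> (ds e)"
    using pi_homD(2)[OF assms(5)] by simp
  also have "\<dots> = d0 M N' (\<lambda>i. u i * \<sigma> i) e"
    unfolding d0_def by (simp add: assoc_mult_mat[OF N'e uc s])
  finally show ?thesis by simp
qed

lemma d0_comp_right: assumes "is_rep M" "is_rep N" "is_rep M'" "cochain0 M N \<sigma>" "pi_hom src tgt M' M v"
  shows "d0 M' N (\<lambda>i. \<sigma> i * v i) e = d0 M N \<sigma> e * v (ds e)"
proof -
  note Me = is_repD(3)[OF assms(1), of e] and Ne = is_repD(3)[OF assms(2), of e]
    and M'e = is_repD(3)[OF assms(3), of e] and s = cochain0D[OF assms(4)] and vc = cochain0D[OF pi_homD(1)[OF assms(5)]]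
  have "d0 M N \<sigma> e * v (ds e) = (\<sigma> (dt e) * mp M e) * v (ds e) - (mp N e * \<sigma> (ds e)) * v (ds e)"
    unfolding d0_def by (rule minus_mult_distrib_mat[OF mult_carrier_mat[OF s Me] mult_carrier_mat[OF Ne s] vc])
  also have "\<dots> = \<sigma> (dt e) * (mp M e * v (ds e)) - mp N e * (\<sigma> (ds e) * v (ds e))"
    by (simp add: assoc_mult_mat[OF s Me vc] assoc_mult_mat[OF Ne s vc])
  also have "\<dots> = \<sigma> (dt e) * (v (dt e) * mp M' e) - mp N e * (\<sigma> (ds e) * v (ds e))"
    using pi_homD(2)[OF assms(5)] by simp
  also have "\<dots> = d0 M' N (\<lambda>i. \<sigma> i * v i) e"
    unfolding d0_def by (simp add: assoc_mult_mat[OF s vc M'e])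
  finally show ?thesis by simp
qed

lemma d1_tgt_summand_carrier: assumes M: "is_rep M" and N: "is_rep N" and phi: "cochain1 M N \<phi>" shows
  "mp N (h,True) * \<phi> (h,False) + \<phi> (h,True) * mp M (h,False) \<in> carrier_mat (dimv N (tgt h)) (dimv M (tgt h))"
  by (rule add_carrier_mat[OF mult_carrier_mat[OF cochain1D(2)[OF phi] is_repD(2)[OF M]]])

lemma d1_src_summand_carrier: assumes M: "is_rep M" and N: "is_rep N" and phi: "cochain1 M N \<phi>" shows
  "mp N (h,False) * \<phi> (h,True) + \<phi> (h,False) * mp M (h,True) \<in> carrier_mat (dimv N (src h)) (dimv M (src h))"
  by (rule add_carrier_mat[OF mult_carrier_mat[OF cochain1D(3)[OF phi] is_repD(1)[OF M]]])

lemma d1_comp_left: assumes M: "is_rep M" and N: "is_rep N" and N': "is_rep N'" and phi: "cochain1 M N \<phi>"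
  and u: "pi_hom src tgt N N' u"
  shows "d1 M N' (\<lambda>e. u (dt e) * \<phi> e) i = u i * d1 M N \<phi> i"
proof -
  note uc = cochain0D[OF pi_homD(1)[OF u]]
  have cA: "\<forall>h\<in>{h. tgt h = i}. mp N (h,True) * \<phi> (h,False) + \<phi> (h,True) * mp M (h,False)
    \<in> carrier_mat (dimv N i) (dimv M i)"
    using d1_tgt_summand_carrier[OF M N phi] by auto
  have cB: "\<forall>h\<in>{h. src h = i}. mp N (h,False) * \<phi> (h,True) + \<phi> (h,False) * mp M (h,True)
    \<in> carrier_mat (dimv N i) (dimv M i)"
    using d1_src_summand_carrier[OF M N phi] by auto
  have "u i * d1 M N \<phi> i = mat_sum (dimv N' i) (dimv M i) {h. tgt h = i}
    (\<lambda>h. u i * (mp N (h,True) * \<phi> (h,False) + \<phi> (h,True) * mp M (h,False)))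
     - mat_sum (dimv N' i) (dimv M i) {h. src h = i}
       (\<lambda>h. u i * (mp N (h,False) * \<phi> (h,True) + \<phi> (h,False) * mp M (h,True)))"
    unfolding d1_def mult_minus_distrib_mat[OF uc mat_sum_carrier mat_sum_carrier]
      mat_sum_mult_left[OF uc[of i] cA] mat_sum_mult_left[OF uc[of i] cB] ..
  also have "\<dots> = d1 M N' (\<lambda>e. u (dt e) * \<phi> e) i"
    unfolding d1_def
  proof (intro arg_cong2[where f = minus] mat_sum_cong)
    fix h assume "h \<in> {h. tgt h = i}"
    then have hi: "tgt h = i" by simp
    show "u i * (mp N (h,True) * \<phi> (h,False) + \<phi> (h,True) * mp M (h,False)) =
      mp N' (h, True) * (u (dt (h, False)) * \<phi> (h, False)) + u (dt (h, True)) * \<phi> (h, True) * mp M (h, False)"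
      using mult_left_intertwine[OF uc[of "tgt h"] is_repD(1)[OF N] cochain1D(3)[OF phi] cochain1D(2)[OF phi]
        is_repD(2)[OF M]
         is_repD(1)[OF N'] uc[of "src h"] pi_homD(3)[OF u]] hi by simp
  next
    fix h assume "h \<in> {h. src h = i}"
    then have hi: "src h = i" by simp
    show "u i * (mp N (h,False) * \<phi> (h,True) + \<phi> (h,False) * mp M (h,True)) =
      mp N' (h, False) * (u (dt (h, True)) * \<phi> (h, True)) + u (dt (h, False)) * \<phi> (h, False) * mp M (h, True)"
      using mult_left_intertwine[OF uc[of "src h"] is_repD(2)[OF N] cochain1D(2)[OF phi] cochain1D(3)[OF phi]
        is_repD(1)[OF M]
         is_repD(2)[OF N'] uc[of "tgt h"] pi_homD(4)[OF u]] hi by simp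
  qed
  finally show ?thesis by simp
qed

lemma d1_comp_right: assumes M: "is_rep M" and N: "is_rep N" and M': "is_rep M'" and phi: "cochain1 M N \<phi>"
  and v: "pi_hom src tgt M' M v"
  shows "d1 M' N (\<lambda>e. \<phi> e * v (ds e)) i = d1 M N \<phi> i * v i"
proof -
  note vc = cochain0D[OF pi_homD(1)[OF v]]
  have cA: "\<forall>h\<in>{h. tgt h = i}. mp N (h,True) * \<phi> (h,False) + \<phi> (h,True) * mp M (h,False)
    \<in> carrier_mat (dimv N i) (dimv M i)"
    using d1_tgt_summand_carrier[OF M N phi] by auto
  have cB: "\<forall>h\<in>{h. src h = i}. mp N (h,False) * \<phi> (h,True) + \<phi> (h,False) * mp M (h,True)
    \<in> carrier_mat (dimv N i) (dimv M i)"
    using d1_src_summand_carrier[OF M N phi] by auto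
  have "d1 M N \<phi> i * v i = mat_sum (dimv N i) (dimv M' i) {h. tgt h = i}
    (\<lambda>h. (mp N (h,True) * \<phi> (h,False) + \<phi> (h,True) * mp M (h,False)) * v i)
     - mat_sum (dimv N i) (dimv M' i) {h. src h = i}
       (\<lambda>h. (mp N (h,False) * \<phi> (h,True) + \<phi> (h,False) * mp M (h,True)) * v i)"
    unfolding d1_def minus_mult_distrib_mat[OF mat_sum_carrier mat_sum_carrier vc]
      mat_sum_mult_right[OF vc[of i] cA] mat_sum_mult_right[OF vc[of i] cB] ..
  also have "\<dots> = d1 M' N (\<lambda>e. \<phi> e * v (ds e)) i"
    unfolding d1_def
  proof (intro arg_cong2[where f = minus] mat_sum_cong)
    fix h assume "h \<in> {h. tgt h = i}"
    then have hi: "tgt h = i" by simp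
    show "(mp N (h,True) * \<phi> (h,False) + \<phi> (h,True) * mp M (h,False)) * v i =
      mp N (h, True) * (\<phi> (h, False) * v (ds (h, False))) + \<phi> (h, True) * v (ds (h, True)) * mp M' (h, False)"
      using mult_right_intertwine[OF vc[of "tgt h"] is_repD(1)[OF N] cochain1D(3)[OF phi] cochain1D(2)[OF phi]
        is_repD(2)[OF M]
         is_repD(2)[OF M'] vc[of "src h"] pi_homD(4)[OF v, symmetric]] hi by simp
  next
    fix h assume "h \<in> {h. src h = i}"
    then have hi: "src h = i" by simp
    show "(mp N (h,False) * \<phi> (h,True) + \<phi> (h,False) * mp M (h,True)) * v i =
      mp N (h, False) * (\<phi> (h, True) * v (ds (h, True))) + \<phi> (h, False) * v (ds (h, False)) * mp M' (h, True)"
      using mult_right_intertwine[OF vc[of "src h"] is_repD(2)[OF N] cochain1D(2)[OF phi] cochain1D(3)[OF phi]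
        is_repD(1)[OF M]
         is_repD(1)[OF M'] vc[of "tgt h"] pi_homD(3)[OF v, symmetric]] hi by simp
  qed
  finally show ?thesis by simp
qed

lemma d1_minus: assumes M: "is_rep M" and N: "is_rep N" and phi: "cochain1 M N \<phi>" and psi: "cochain1 M N \<psi>"
  shows "d1 M N (\<lambda>e. \<phi> e - \<psi> e) i = d1 M N \<phi> i - d1 M N \<psi> i"
proof -
  define fA where "fA \<chi> h = mp N (h,True) * \<chi> (h,False) + \<chi> (h,True) * mp M (h,False)" for \<chi> h
  define fB where "fB \<chi> h = mp N (h,False) * \<chi> (h,True) + \<chi> (h,False) * mp M (h,True)" for \<chi> h
  have d1e: "d1 M N \<chi> i = mat_sum (dimv N i) (dimv M i) {h. tgt h = i} (fA \<chi>)
    - mat_sum (dimv N i) (dimv M i) {h. src h = i} (fB \<chi>)" for \<chi>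
    unfolding d1_def fA_def fB_def ..
  have cA: "\<forall>h\<in>{h. tgt h = i}. fA \<chi> h
    \<in> carrier_mat (dimv N i) (dimv M i)" if "cochain1 M N \<chi>" for \<chi>
    using d1_tgt_summand_carrier[OF M N that] unfolding fA_def by auto
  have cB: "\<forall>h\<in>{h. src h = i}. fB \<chi> h
    \<in> carrier_mat (dimv N i) (dimv M i)" if "cochain1 M N \<chi>" for \<chi>
    using d1_src_summand_carrier[OF M N that] unfolding fB_def by auto
  have "d1 M N (\<lambda>e. \<phi> e - \<psi> e) i
    = mat_sum (dimv N i) (dimv M i) {h. tgt h = i} (\<lambda>h. fA \<phi> h - fA \<psi> h)
     - mat_sum (dimv N i) (dimv M i) {h. src h = i} (\<lambda>h. fB \<phi> h - fB \<psi> h)"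
    unfolding d1e
  proof (intro arg_cong2[where f = minus] mat_sum_cong)
    fix h
    show "fA (\<lambda>e. \<phi> e - \<psi> e) h = fA \<phi> h - fA \<psi> h"
      unfolding fA_def by (rule mult_add_mult_diff_distrib[OF is_repD(1)[OF N] cochain1D(3)[OF phi] cochain1D(3)[OF psi] cochain1D(2)[OF phi] cochain1D(2)[OF psi] is_repD(2)[OF M]])
    show "fB (\<lambda>e. \<phi> e - \<psi> e) h = fB \<phi> h - fB \<psi> h"
      unfolding fB_def by (rule mult_add_mult_diff_distrib[OF is_repD(2)[OF N] cochain1D(2)[OF phi] cochain1D(2)[OF psi] cochain1D(3)[OF phi] cochain1D(3)[OF psi] is_repD(1)[OF M]])
  qed
  also have "\<dots> = (mat_sum (dimv N i) (dimv M i) {h. tgt h = i} (fA \<phi>)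
    - mat_sum (dimv N i) (dimv M i) {h. tgt h = i} (fA \<psi>))
     - (mat_sum (dimv N i) (dimv M i) {h. src h = i} (fB \<phi>)
       - mat_sum (dimv N i) (dimv M i) {h. src h = i} (fB \<psi>))"
    unfolding mat_sum_minus[OF cA[OF phi] cA[OF psi]] mat_sum_minus[OF cB[OF phi] cB[OF psi]] ..
  also have "\<dots> = d1 M N \<phi> i - d1 M N \<psi> i"
    unfolding d1e by (rule mat_diff_diff_commute) auto
  finally show ?thesis .
qed

lemma d1_d0: assumes M: "is_rep M" and N: "is_rep N" and s: "cochain0 M N \<sigma>"
  shows "d1 M N (d0 M N \<sigma>) i = \<sigma> i * preproj_rel M i - preproj_rel N i * \<sigma> i"
proof -
  note sc = cochain0D[OF s]
  have cM: "\<forall>h\<in>{h. tgt h = i}. mp M (h,True) * mp M (h,False) \<in> carrier_mat (dimv M i) (dimv M i)"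
    "\<forall>h\<in>{h. src h = i}. mp M (h,False) * mp M (h,True) \<in> carrier_mat (dimv M i) (dimv M i)"
    using is_repD(1,2)[OF M] by (auto intro: mult_carrier_mat)
  have cN: "\<forall>h\<in>{h. tgt h = i}. mp N (h,True) * mp N (h,False) \<in> carrier_mat (dimv N i) (dimv N i)"
    "\<forall>h\<in>{h. src h = i}. mp N (h,False) * mp N (h,True) \<in> carrier_mat (dimv N i) (dimv N i)"
    using is_repD(1,2)[OF N] by (auto intro: mult_carrier_mat)
  have c\<sigma>M: "\<forall>h\<in>{h. tgt h = i}. \<sigma> i * (mp M (h,True) * mp M (h,False))
    \<in> carrier_mat (dimv N i) (dimv M i)"
    "\<forall>h\<in>{h. src h = i}. \<sigma> i * (mp M (h,False) * mp M (h,True)) \<in> carrier_mat (dimv N i) (dimv M i)"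
    using cM sc[of i] by (auto intro: mult_carrier_mat)
  have cN\<sigma>: "\<forall>h\<in>{h. tgt h = i}. mp N (h,True) * mp N (h,False) * \<sigma> i
    \<in> carrier_mat (dimv N i) (dimv M i)"
    "\<forall>h\<in>{h. src h = i}. mp N (h,False) * mp N (h,True) * \<sigma> i \<in> carrier_mat (dimv N i) (dimv M i)"
    using cN sc[of i] by (auto intro: mult_carrier_mat)
  have "d1 M N (d0 M N \<sigma>) i =
      mat_sum (dimv N i) (dimv M i) {h. tgt h = i}
        (\<lambda>h. \<sigma> i * (mp M (h,True) * mp M (h,False)) - (mp N (h,True) * mp N (h,False)) * \<sigma> i)
    - mat_sum (dimv N i) (dimv M i) {h. src h = i}
      (\<lambda>h. \<sigma> i * (mp M (h,False) * mp M (h,True)) - (mp N (h,False) * mp N (h,True)) * \<sigma> i)"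
    unfolding d1_def
  proof (intro arg_cong2[where f = minus] mat_sum_cong)
    fix h assume "h \<in> {h. tgt h = i}"
    then have hi: "tgt h = i" by simp
    show "mp N (h, True) * d0 M N \<sigma> (h, False) + d0 M N \<sigma> (h, True) * mp M (h, False) =
       \<sigma> i * (mp M (h,True) * mp M (h,False)) - (mp N (h,True) * mp N (h,False)) * \<sigma> i"
      unfolding d0_def using mat_commutator_telescope[OF is_repD(1)[OF N] is_repD(2)[OF N] is_repD(1)[OF M]
        is_repD(2)[OF M] sc[of "tgt h"] sc[of "src h"]] hi
      by simp
  next
    fix h assume "h \<in> {h. src h = i}"
    then have hi: "src h = i" by simp
    show "mp N (h, False) * d0 M N \<sigma> (h, True) + d0 M N \<sigma> (h, False) * mp M (h, True) =
       \<sigma> i * (mp M (h,False) * mp M (h,True)) - (mp N (h,False) * mp N (h,True)) * \<sigma> i"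
      unfolding d0_def using mat_commutator_telescope[OF is_repD(2)[OF N] is_repD(1)[OF N] is_repD(2)[OF M]
        is_repD(1)[OF M] sc[of "src h"] sc[of "tgt h"]] hi
      by simp
  qed
  also have "\<dots> = (\<sigma> i * mat_sum (dimv M i) (dimv M i) {h. tgt h = i}
    (\<lambda>h. mp M (h,True) * mp M (h,False))
        - mat_sum (dimv N i) (dimv N i) {h. tgt h = i} (\<lambda>h. mp N (h,True) * mp N (h,False)) * \<sigma> i)
     - (\<sigma> i * mat_sum (dimv M i) (dimv M i) {h. src h = i} (\<lambda>h. mp M (h,False) * mp M (h,True))
        - mat_sum (dimv N i) (dimv N i) {h. src h = i} (\<lambda>h. mp N (h,False) * mp N (h,True)) * \<sigma> i)"
    unfolding mat_sum_minus[OF c\<sigma>M(1) cN\<sigma>(1)] mat_sum_minus[OF c\<sigma>M(2) cN\<sigma>(2)]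
      mat_sum_mult_left[OF sc cM(1), symmetric] mat_sum_mult_left[OF sc cM(2), symmetric]
      mat_sum_mult_right[OF sc cN(1), symmetric] mat_sum_mult_right[OF sc cN(2), symmetric] ..
  also have "\<dots> = \<sigma> i * preproj_rel M i - preproj_rel N i * \<sigma> i"
    unfolding preproj_rel_def mult_minus_distrib_mat[OF sc mat_sum_carrier mat_sum_carrier]
      minus_mult_distrib_mat[OF mat_sum_carrier mat_sum_carrier sc]
    by (rule mat_diff_diff_commute) (auto intro: mult_carrier_mat[OF sc mat_sum_carrier] mult_carrier_mat[OF mat_sum_carrier sc])
  finally show ?thesis .
qed

lemma cocycle_d0: assumes M: "pi_module src tgt M" and N: "pi_module src tgt N" and s: "cochain0 M N \<sigma>"
  shows "cocycle M N (d0 M N \<sigma>)"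
proof -
  have rM: "is_rep M" and rN: "is_rep N" using M N pi_module_iff by auto
  have "d1 M N (d0 M N \<sigma>) i = 0\<^sub>m (dimv N i) (dimv M i)" for i
    using d1_d0[OF rM rN s, of i] M N cochain0D[OF s, of i] unfolding pi_module_iff by simp
  then show ?thesis unfolding cocycle_def using d0_cochain1[OF rM rN s] by simp
qed

lemma cochain1_comp_left: "cochain1 M N \<phi> \<Longrightarrow> cochain0 N N' u
  \<Longrightarrow> cochain1 M N' (\<lambda>e. u (dt e) * \<phi> e)"
  unfolding cochain1_def cochain0_def by (metis mult_carrier_mat)

lemma cochain1_comp_right: "cochain1 M N \<phi> \<Longrightarrow> cochain0 M' M v
  \<Longrightarrow> cochain1 M' N (\<lambda>e. \<phi> e * v (ds e))"
  unfolding cochain1_def cochain0_def by (metis mult_carrier_mat)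

lemma cochain0_comp: "cochain0 M N \<sigma> \<Longrightarrow> cochain0 N N' u
  \<Longrightarrow> cochain0 M N' (\<lambda>i. u i * \<sigma> i)"
  unfolding cochain0_def by (metis mult_carrier_mat)

lemma cochain1_minus: "cochain1 M N \<phi> \<Longrightarrow> cochain1 M N \<psi>
  \<Longrightarrow> cochain1 M N (\<lambda>e. \<phi> e - \<psi> e)"
  unfolding cochain1_def by (metis minus_carrier_mat)

lemma cochain0_minus: "cochain0 M N \<phi> \<Longrightarrow> cochain0 M N \<psi>
  \<Longrightarrow> cochain0 M N (\<lambda>e. \<phi> e - \<psi> e)"
  unfolding cochain0_def by (metis minus_carrier_mat)

lemma cochain0_add: "cochain0 M N \<phi> \<Longrightarrow> cochain0 M N \<psi>
  \<Longrightarrow> cochain0 M N (\<lambda>e. \<phi> e + \<psi> e)"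
  unfolding cochain0_def by (metis add_carrier_mat)

lemma cocycle_comp_left: assumes "is_rep M" "is_rep N" "is_rep N'" "cocycle M N \<phi>" "pi_hom src tgt N N' u"
  shows "cocycle M N' (\<lambda>e. u (dt e) * \<phi> e)"
  using assms d1_comp_left[OF assms(1-3) _ assms(5)] cochain1_comp_left[OF _ pi_homD(1)[OF assms(5)]]
  unfolding cocycle_def by (simp add: right_mult_zero_mat[OF cochain0D[OF pi_homD(1)[OF assms(5)]]])

lemma cocycle_comp_right: assumes "is_rep M" "is_rep N" "is_rep M'" "cocycle M N \<phi>" "pi_hom src tgt M' M v"
  shows "cocycle M' N (\<lambda>e. \<phi> e * v (ds e))"
  using assms d1_comp_right[OF assms(1-3) _ assms(5)] cochain1_comp_right[OF _ pi_homD(1)[OF assms(5)]]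
  unfolding cocycle_def by (simp add: left_mult_zero_mat[OF cochain0D[OF pi_homD(1)[OF assms(5)]]])

lemma cocycle_minus: assumes "is_rep M" "is_rep N" "cocycle M N \<phi>" "cocycle M N \<psi>"
  shows "cocycle M N (\<lambda>e. \<phi> e - \<psi> e)"
proof -
  have c: "cochain1 M N \<phi>" "cochain1 M N \<psi>" using assms(3,4) unfolding cocycle_def by auto
  show ?thesis using assms(3,4) d1_minus[OF assms(1,2) c] cochain1_minus[OF c] unfolding cocycle_def by simp
qed

lemma cocycleD:
  "cocycle M N \<phi> \<Longrightarrow> cochain1 M N \<phi>"
  "cocycle M N \<phi> \<Longrightarrow> d1 M N \<phi> i = 0\<^sub>m (dimv N i) (dimv M i)"
  unfolding cocycle_def by auto

lemma pi_moduleD: "pi_module src tgt M \<Longrightarrow> is_rep M"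
  by (simp add: pi_module_iff)

lemma pi_hom_id: assumes "is_rep M" shows "pi_hom src tgt M M (\<lambda>i. 1\<^sub>m (dimv M i))"
  unfolding pi_hom_def
  by (simp add: left_mult_one_mat[OF is_repD(3)[OF assms]] right_mult_one_mat[OF is_repD(3)[OF assms]])

lemma pi_homI:
  "is_rep M \<Longrightarrow> is_rep N \<Longrightarrow> cochain0 M N u \<Longrightarrow>
    (\<And>e. d0 M N u e = 0\<^sub>m (dimv N (dt e)) (dimv M (ds e))) \<Longrightarrow> pi_hom src tgt M N u"
  using pi_hom_iff_d0 by blast

lemma pi_hom_d0:
  "is_rep M \<Longrightarrow> is_rep N \<Longrightarrow> pi_hom src tgt M N u \<Longrightarrow> d0 M N u e
    = 0\<^sub>m (dimv N (dt e)) (dimv M (ds e))"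
  using pi_hom_iff_d0 by blast

lemma pi_sesD: assumes "pi_ses src tgt A B C f g"
  shows "pi_module src tgt A" "pi_module src tgt B" "pi_module src tgt C"
    "pi_hom src tgt A B f" "pi_hom src tgt B C g"
    "is_rep A" "is_rep B" "is_rep C"
    "\<And>i. f i \<in> carrier_mat (dimv B i) (dimv A i)" "\<And>i. g i \<in> carrier_mat (dimv C i) (dimv B i)"
    "\<And>i. \<forall>u \<in> carrier_vec (dimv A i). f i *\<^sub>v u = 0\<^sub>v (dimv B i) \<longrightarrow> u = 0\<^sub>v (dimv A i)"
    "\<And>i v. v \<in> carrier_vec (dimv B i) \<Longrightarrow>
        (g i *\<^sub>v v = 0\<^sub>v (dimv C i))
          \<longleftrightarrow> (\<exists>u \<in> carrier_vec (dimv A i). f i *\<^sub>v u = v)"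
    "\<And>i w. w \<in> carrier_vec (dimv C i) \<Longrightarrow> \<exists>v \<in> carrier_vec (dimv B i). g i *\<^sub>v v = w"
  using assms unfolding pi_ses_def pi_module_iff pi_hom_def by blast+

lemma ses_section: assumes "pi_ses src tgt A B C f g"
  shows "\<exists>t. cochain0 C B t \<and> (\<forall>i. g i * t i = 1\<^sub>m (dimv C i))"
proof -
  note p = pi_sesD[OF assms]
  have "\<exists>t\<in>carrier_mat (dimv B i) (dimv C i). g i * t = 1\<^sub>m (dimv C i)" for i
    by (rule mat_lift_columns[OF p(10)]) (auto intro: p(13))
  then obtain t where "\<And>i. t i \<in> carrier_mat (dimv B i) (dimv C i) \<and> g i * t i = 1\<^sub>m (dimv C i)"
    by metis
  then show ?thesis unfolding cochain0_def by blast
qed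

lemma ses_factor_through_sub: assumes "pi_ses src tgt A B C f g" and X: "X \<in> carrier_mat (dimv B i) m"
  and gX: "g i * X = 0\<^sub>m (dimv C i) m"
  shows "\<exists>Y\<in>carrier_mat (dimv A i) m. f i * Y = X"
proof (rule mat_lift_columns[OF pi_sesD(9)[OF assms(1)] X])
  fix j assume j: "j < m"
  have "g i *\<^sub>v col X j = col (g i * X) j" using col_mult2[OF pi_sesD(10)[OF assms(1)] X j] by simp
  also have "\<dots> = 0\<^sub>v (dimv C i)" using gX j by simp
  finally show "\<exists>u\<in>carrier_vec (dimv A i). f i *\<^sub>v u = col X j"
    using pi_sesD(12)[OF assms(1), of "col X j" i] X j by auto
qed

lemma ses_sub_cancel: assumes "pi_ses src tgt A B C f g" and "Y \<in> carrier_mat (dimv A i) m"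
  and "Y' \<in> carrier_mat (dimv A i) m" and "f i * Y = f i * Y'"
  shows "Y = Y'"
  by (rule mat_inj_left_cancel[OF pi_sesD(9)[OF assms(1)] pi_sesD(11)[OF assms(1)] assms(2-4)])

lemma ses_comp_zero: assumes "pi_ses src tgt A B C f g"
  shows "g i * f i = 0\<^sub>m (dimv C i) (dimv A i)"
proof -
  note p = pi_sesD[OF assms]
  have "col (g i * f i) j = col (0\<^sub>m (dimv C i) (dimv A i)) j" if j: "j < dimv A i" for j
  proof -
    have "col (g i * f i) j = g i *\<^sub>v col (f i) j" using col_mult2[OF p(10) p(9) j] .
    also have "\<dots> = 0\<^sub>v (dimv C i)"
      using p(12)[of "col (f i) j" i] mat_unit_col[OF p(9) j] p(9) j by auto
    finally show ?thesis using j by simp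
  qed
  then show ?thesis by (intro mat_col_eqI) (use p(9,10) in auto)
qed

lemma ses_retraction:
  assumes ses: "pi_ses src tgt A B C f g" and t: "cochain0 C B t" "\<And>i. g i * t i = 1\<^sub>m (dimv C i)"
  shows "\<exists>R. \<forall>i. R i \<in> carrier_mat (dimv A i) (dimv B i) \<and> R i * f i = 1\<^sub>m (dimv A i)
     \<and> f i * R i + t i * g i = 1\<^sub>m (dimv B i)"
proof -
  note p = pi_sesD[OF ses]
  have "\<exists>R\<in>carrier_mat (dimv A i) (dimv B i). R * f i = 1\<^sub>m (dimv A i) \<and> f i * R
    + t i * g i = 1\<^sub>m (dimv B i)" for i
  proof -
    note ti = cochain0D[OF t(1), of i] and fi = p(9)[of i] and gi = p(10)[of i]
    have tg: "t i * g i \<in> carrier_mat (dimv B i) (dimv B i)" using ti gi by simp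
    have X: "1\<^sub>m (dimv B i) - t i * g i \<in> carrier_mat (dimv B i) (dimv B i)"
      by (rule minus_carrier_mat[OF tg])
    have "g i * (1\<^sub>m (dimv B i) - t i * g i) = g i * 1\<^sub>m (dimv B i) - g i * (t i * g i)"
      by (rule mult_minus_distrib_mat[OF gi one_carrier_mat tg])
    also have "\<dots> = g i - (g i * t i) * g i" using assoc_mult_mat[OF gi ti gi] gi by simp
    also have "\<dots> = 0\<^sub>m (dimv C i) (dimv B i)" using t(2) gi by simp
    finally obtain R where R: "R \<in> carrier_mat (dimv A i) (dimv B i)" "f i * R = 1\<^sub>m (dimv B i) - t i * g i"
      using ses_factor_through_sub[OF ses X] by blast
    have "f i * (R * f i) = (f i * R) * f i" using assoc_mult_mat[OF fi R(1) fi] by simp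
    also have "\<dots> = f i - t i * (g i * f i)"
      unfolding R(2) using minus_mult_distrib_mat[OF one_carrier_mat tg fi] assoc_mult_mat[OF ti gi fi] fi by simp
    also have "\<dots> = f i * 1\<^sub>m (dimv A i)" using ses_comp_zero[OF ses, of i] fi ti by (auto intro!: eq_matI)
    finally have "R * f i = 1\<^sub>m (dimv A i)"
      by (rule ses_sub_cancel[OF ses mult_carrier_mat[OF R(1) fi] one_carrier_mat])
    moreover have "f i * R + t i * g i = 1\<^sub>m (dimv B i)" unfolding R(2)
      by (rule mat_diff_add_cancel[OF one_carrier_mat tg])
    ultimately show ?thesis using R(1) by blast
  qed
  then show ?thesis by metis
qed

lemma ses_quotient_cancel:
  assumes ses: "pi_ses src tgt A B C f g" and t: "cochain0 C B t" "\<And>i. g i * t i = 1\<^sub>m (dimv C i)"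
  and X: "X \<in> carrier_mat p (dimv C i)" and Xg: "X * g i = 0\<^sub>m p (dimv B i)"
  shows "X = 0\<^sub>m p (dimv C i)"
proof -
  note ti = cochain0D[OF t(1), of i] and gi = pi_sesD(10)[OF ses, of i]
  have "X = X * (g i * t i)" using t(2) X by simp
  also have "\<dots> = (X * g i) * t i" using assoc_mult_mat[OF X gi ti] by simp
  also have "\<dots> = 0\<^sub>m p (dimv C i)" using Xg ti by simp
  finally show ?thesis .
qed

lemma ses_factor_through_quotient: assumes ses: "pi_ses src tgt A B C f g"
  and t: "cochain0 C B t" "\<And>i. g i * t i = 1\<^sub>m (dimv C i)"
  and X: "X \<in> carrier_mat p (dimv B i)" and Xf: "X * f i = 0\<^sub>m p (dimv A i)"
  shows "X = (X * t i) * g i"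
proof -
  note ti = cochain0D[OF t(1), of i] and gi = pi_sesD(10)[OF ses, of i] and fi = pi_sesD(9)[OF ses, of i]
  obtain R where R: "R i \<in> carrier_mat (dimv A i) (dimv B i)" "f i * R i + t i * g i = 1\<^sub>m (dimv B i)"
    using ses_retraction[OF ses t] by blast
  have "X = X * (f i * R i + t i * g i)" using R(2) X by simp
  also have "\<dots> = X * (f i * R i) + X * (t i * g i)"
    by (rule mult_add_distrib_mat[OF X mult_carrier_mat[OF fi R(1)] mult_carrier_mat[OF ti gi]])
  also have "\<dots> = (X * f i) * R i + (X * t i) * g i"
    using assoc_mult_mat[OF X fi R(1)] assoc_mult_mat[OF X ti gi] by simp
  also have "\<dots> = (X * t i) * g i" using Xf R(1) X ti gi by simp
  finally show ?thesis .
qed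

lemma cocycle_cancel_sub: assumes ses: "pi_ses src tgt A B C f g" and M: "is_rep M" and psi: "cochain1 M A \<psi>"
  and Z: "cocycle M B (\<lambda>e. f (dt e) * \<psi> e)"
  shows "cocycle M A \<psi>"
proof -
  note p = pi_sesD[OF ses]
  have "d1 M A \<psi> i = 0\<^sub>m (dimv A i) (dimv M i)" for i
  proof (rule ses_sub_cancel[OF ses d1_carrier zero_carrier_mat])
    have "f i * d1 M A \<psi> i = d1 M B (\<lambda>e. f (dt e) * \<psi> e) i"
      using d1_comp_left[OF M p(6) p(7) psi p(4)] by simp
    also have "\<dots> = 0\<^sub>m (dimv B i) (dimv M i)" using Z unfolding cocycle_def by simp
    finally show "f i * d1 M A \<psi> i = f i * 0\<^sub>m (dimv A i) (dimv M i)" using p(9)[of i] by simp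
  qed
  then show ?thesis using psi unfolding cocycle_def by simp
qed

lemma cocycle_cancel_quotient: assumes ses: "pi_ses src tgt A B C f g"
  and t: "cochain0 C B t" "\<And>i. g i * t i = 1\<^sub>m (dimv C i)"
  and N: "is_rep N" and chi: "cochain1 C N \<chi>" and Z: "cocycle B N (\<lambda>e. \<chi> e * g (ds e))"
  shows "cocycle C N \<chi>"
proof -
  note p = pi_sesD[OF ses]
  have "d1 C N \<chi> i = 0\<^sub>m (dimv N i) (dimv C i)" for i
  proof (rule ses_quotient_cancel[OF ses t d1_carrier])
    have "d1 C N \<chi> i * g i = d1 B N (\<lambda>e. \<chi> e * g (ds e)) i"
      using d1_comp_right[OF p(8) N p(7) chi p(5)] by simp
    also have "\<dots> = 0\<^sub>m (dimv N i) (dimv B i)" using Z unfolding cocycle_def by simp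
    finally show "d1 C N \<chi> i * g i = 0\<^sub>m (dimv N i) (dimv B i)" .
  qed
  then show ?thesis using chi unfolding cocycle_def by simp
qed

lemma ses_factor_cocycle_through_sub:
  assumes ses: "pi_ses src tgt A B C f g" and M: "is_rep M" and X: "cocycle M B X"
    and gX: "\<And>e. g (dt e) * X e = 0\<^sub>m (dimv C (dt e)) (dimv M (ds e))"
  obtains \<psi> where "cocycle M A \<psi>" "\<And>e. f (dt e) * \<psi> e = X e"
proof -
  have "\<exists>Y\<in>carrier_mat (dimv A (dt e)) (dimv M (ds e)). f (dt e) * Y = X e" for e
    by (rule ses_factor_through_sub[OF ses cochain1D(1)[OF cocycleD(1)[OF X]] gX])
  then obtain \<psi> where \<psi>: "\<And>e. \<psi> e \<in> carrier_mat (dimv A (dt e)) (dimv M (ds e))"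
    "\<And>e. f (dt e) * \<psi> e = X e" by metis
  have "cochain1 M A \<psi>" using \<psi>(1) by (simp add: cochain1_def)
  moreover have "cocycle M B (\<lambda>e. f (dt e) * \<psi> e)" using X \<psi>(2) by simp
  ultimately have "cocycle M A \<psi>" by (rule cocycle_cancel_sub[OF ses M])
  then show thesis using \<psi>(2) by (rule that)
qed

lemma ses_factor_cocycle_through_quotient:
  assumes ses: "pi_ses src tgt A B C f g" and N: "is_rep N" and Y: "cocycle B N Y"
    and Yf: "\<And>e. Y e * f (ds e) = 0\<^sub>m (dimv N (dt e)) (dimv A (ds e))"
  obtains \<chi> where "cocycle C N \<chi>" "\<And>e. Y e = \<chi> e * g (ds e)"
proof -
  obtain t where t: "cochain0 C B t" "\<And>i. g i * t i = 1\<^sub>m (dimv C i)" using ses_section[OF ses] by blast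
  define \<chi> where "\<chi> e = Y e * t (ds e)" for e
  note Yc = cochain1D(1)[OF cocycleD(1)[OF Y]]
  have \<chi>: "cochain1 C N \<chi>" unfolding \<chi>_def cochain1_def using Yc cochain0D[OF t(1)]
    by (metis mult_carrier_mat)
  have Y\<chi>: "Y e = \<chi> e * g (ds e)" for e
    unfolding \<chi>_def by (rule ses_factor_through_quotient[OF ses t Yc Yf])
  have "cocycle B N (\<lambda>e. \<chi> e * g (ds e))" using Y Y\<chi> by (metis (no_types, lifting) ext)
  then have "cocycle C N \<chi>" by (rule cocycle_cancel_quotient[OF ses t N \<chi>])
  then show thesis using Y\<chi> by (rule that)
qed

section \<open>Exactness of the long exact sequences\<close>

text \<open>Each is a diagram chase:
  lift vertexwise along a section \<open>t\<close> of \<open>g\<close> or a retraction \<open>R\<close> of \<open>f\<close> (short exact sequences of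
  vector spaces split), then correct by a coboundary.\<close>

lemma cocycle_cohomologous_through_sub:
  assumes ses: "pi_ses src tgt A B C f g" and M: "pi_module src tgt M"
    and H: "H1_zero M C" and \<phi>: "cocycle M B \<phi>"
  obtains \<tau> \<psi> where "cochain0 M B \<tau>" "cocycle M A \<psi>" "\<And>e. \<phi> e = d0 M B \<tau> e
    + f (dt e) * \<psi> e"
proof -
  note p = pi_sesD[OF ses] and rM = pi_moduleD[OF M]
  obtain t where t: "cochain0 C B t" "\<And>i. g i * t i = 1\<^sub>m (dimv C i)" using ses_section[OF ses] by blast
  have "cocycle M C (\<lambda>e. g (dt e) * \<phi> e)" by (rule cocycle_comp_left[OF rM p(7) p(8) \<phi> p(5)])
  then obtain \<sigma> where \<sigma>: "cochain0 M C \<sigma>" "d0 M C \<sigma> = (\<lambda>e. g (dt e) * \<phi> e)"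
    using H unfolding H1_zero_def by blast
  define \<tau> where "\<tau> i = t i * \<sigma> i" for i
  have \<tau>: "cochain0 M B \<tau>" unfolding \<tau>_def by (rule cochain0_comp[OF \<sigma>(1) t(1)])
  have g\<tau>: "g i * \<tau> i = \<sigma> i" for i
    unfolding \<tau>_def assoc_mult_mat[OF p(10) cochain0D[OF t(1)] cochain0D[OF \<sigma>(1)], symmetric] t(2)
    by (rule left_mult_one_mat[OF cochain0D[OF \<sigma>(1)]])
  define X where "X = (\<lambda>e. \<phi> e - d0 M B \<tau> e)"
  note \<phi>c = cochain1D(1)[OF cocycleD(1)[OF \<phi>]] and d\<tau>c = cochain1D(1)[OF d0_cochain1[OF rM p(7) \<tau>]]
  have "cocycle M B X" unfolding X_def by (rule cocycle_minus[OF rM p(7) \<phi> cocycle_d0[OF M p(2) \<tau>]])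
  moreover have "g (dt e) * X e = 0\<^sub>m (dimv C (dt e)) (dimv M (ds e))" for e
  proof -
    have "g (dt e) * d0 M B \<tau> e = g (dt e) * \<phi> e"
      using d0_comp_left[OF rM p(7) p(8) \<tau> p(5), of e] g\<tau> \<sigma>(2) by simp
    then show ?thesis unfolding X_def mult_minus_distrib_mat[OF p(10) \<phi>c d\<tau>c]
      using mult_carrier_mat[OF p(10) \<phi>c] by simp
  qed
  ultimately obtain \<psi> where \<psi>: "cocycle M A \<psi>" "\<And>e. f (dt e) * \<psi> e = X e"
    using ses_factor_cocycle_through_sub[OF ses rM] by blast
  have "\<phi> e = d0 M B \<tau> e + f (dt e) * \<psi> e" for e
    unfolding \<psi>(2) X_def by (rule mat_add_diff_cancel[OF d\<tau>c \<phi>c, symmetric])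
  with \<tau> \<psi>(1) show thesis by (rule that)
qed

lemma cocycle_cohomologous_through_quotient:
  assumes ses: "pi_ses src tgt A B C f g" and N: "pi_module src tgt N"
    and H: "H1_zero A N" and \<psi>: "cocycle B N \<psi>"
  obtains \<rho> \<chi> where "cochain0 B N \<rho>" "cocycle C N \<chi>" "\<And>e. \<psi> e = d0 B N \<rho> e
    + \<chi> e * g (ds e)"
proof -
  note p = pi_sesD[OF ses] and rN = pi_moduleD[OF N]
  obtain t where t: "cochain0 C B t" "\<And>i. g i * t i = 1\<^sub>m (dimv C i)" using ses_section[OF ses] by blast
  obtain R where R: "\<And>i. R i \<in> carrier_mat (dimv A i) (dimv B i)" "\<And>i. R i * f i = 1\<^sub>m (dimv A i)"
    using ses_retraction[OF ses t] by blast
  have "cocycle A N (\<lambda>e. \<psi> e * f (ds e))" by (rule cocycle_comp_right[OF p(7) rN p(6) \<psi> p(4)])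
  then obtain \<sigma> where \<sigma>: "cochain0 A N \<sigma>" "d0 A N \<sigma> = (\<lambda>e. \<psi> e * f (ds e))"
    using H unfolding H1_zero_def by blast
  define \<rho> where "\<rho> i = \<sigma> i * R i" for i
  have \<rho>: "cochain0 B N \<rho>" unfolding \<rho>_def cochain0_def using cochain0D[OF \<sigma>(1)] R(1)
    by (metis mult_carrier_mat)
  have \<rho>f: "\<rho> i * f i = \<sigma> i" for i
    unfolding \<rho>_def assoc_mult_mat[OF cochain0D[OF \<sigma>(1)] R(1) p(9)] R(2)
    by (rule right_mult_one_mat[OF cochain0D[OF \<sigma>(1)]])
  define Y where "Y = (\<lambda>e. \<psi> e - d0 B N \<rho> e)"
  note \<psi>c = cochain1D(1)[OF cocycleD(1)[OF \<psi>]] and d\<rho>c = cochain1D(1)[OF d0_cochain1[OF p(7) rN \<rho>]]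
  have "cocycle B N Y" unfolding Y_def by (rule cocycle_minus[OF p(7) rN \<psi> cocycle_d0[OF p(2) N \<rho>]])
  moreover have "Y e * f (ds e) = 0\<^sub>m (dimv N (dt e)) (dimv A (ds e))" for e
  proof -
    have "d0 B N \<rho> e * f (ds e) = \<psi> e * f (ds e)"
      using d0_comp_right[OF p(7) rN p(6) \<rho> p(4), of e] \<rho>f \<sigma>(2) by simp
    then show ?thesis unfolding Y_def minus_mult_distrib_mat[OF \<psi>c d\<rho>c p(9)]
      using mult_carrier_mat[OF \<psi>c p(9)] by simp
  qed
  ultimately obtain \<chi> where \<chi>: "cocycle C N \<chi>" "\<And>e. Y e = \<chi> e * g (ds e)"
    using ses_factor_cocycle_through_quotient[OF ses rN] by blast
  have "\<psi> e = d0 B N \<rho> e + \<chi> e * g (ds e)" for e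
    unfolding \<chi>(2)[symmetric] Y_def by (rule mat_add_diff_cancel[OF d\<rho>c \<psi>c, symmetric])
  with \<rho> \<chi>(1) show thesis by (rule that)
qed

lemma hom_lift_through_quotient:
  assumes ses: "pi_ses src tgt A B C f g" and M: "pi_module src tgt M"
    and H: "H1_zero M A" and \<alpha>: "pi_hom src tgt M C \<alpha>"
  obtains \<beta> where "pi_hom src tgt M B \<beta>" "\<And>i. g i * \<beta> i = \<alpha> i"
proof -
  note p = pi_sesD[OF ses] and rM = pi_moduleD[OF M]
  obtain t where t: "cochain0 C B t" "\<And>i. g i * t i = 1\<^sub>m (dimv C i)" using ses_section[OF ses] by blast
  note \<alpha>c = cochain0D[OF pi_homD(1)[OF \<alpha>]]
  define \<beta>' where "\<beta>' i = t i * \<alpha> i" for i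
  have \<beta>': "cochain0 M B \<beta>'" unfolding \<beta>'_def by (rule cochain0_comp[OF pi_homD(1)[OF \<alpha>] t(1)])
  have g\<beta>': "g i * \<beta>' i = \<alpha> i" for i
    unfolding \<beta>'_def assoc_mult_mat[OF p(10) cochain0D[OF t(1)] \<alpha>c, symmetric] t(2)
    by (rule left_mult_one_mat[OF \<alpha>c])
  note d\<beta>'c = cochain1D(1)[OF d0_cochain1[OF rM p(7) \<beta>']]
  have "g (dt e) * d0 M B \<beta>' e = 0\<^sub>m (dimv C (dt e)) (dimv M (ds e))" for e
  proof -
    have "g (dt e) * d0 M B \<beta>' e = d0 M C \<alpha> e"
      using d0_comp_left[OF rM p(7) p(8) \<beta>' p(5), of e] g\<beta>' by simp
    also have "\<dots> = 0\<^sub>m (dimv C (dt e)) (dimv M (ds e))" using \<alpha> pi_hom_iff_d0[OF rM p(8)] by blast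
    finally show ?thesis .
  qed
  then obtain \<gamma> where \<gamma>: "cocycle M A \<gamma>" "\<And>e. f (dt e) * \<gamma> e = d0 M B \<beta>' e"
    using ses_factor_cocycle_through_sub[OF ses rM cocycle_d0[OF M p(2) \<beta>']] by blast
  obtain \<kappa> where \<kappa>: "cochain0 M A \<kappa>" "d0 M A \<kappa> = \<gamma>" using H \<gamma>(1)
    unfolding H1_zero_def by blast
  define \<beta> where "\<beta> i = \<beta>' i - f i * \<kappa> i" for i
  have f\<kappa>: "cochain0 M B (\<lambda>i. f i * \<kappa> i)"
    by (rule cochain0_comp[OF \<kappa>(1) pi_homD(1)[OF p(4)]])
  have \<beta>: "cochain0 M B \<beta>" unfolding \<beta>_def by (rule cochain0_minus[OF \<beta>' f\<kappa>])
  have "d0 M B \<beta> e = 0\<^sub>m (dimv B (dt e)) (dimv M (ds e))" for e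
    unfolding \<beta>_def d0_minus[OF rM p(7) \<beta>' f\<kappa>]
      d0_comp_left[OF rM p(6) p(7) \<kappa>(1) p(4)] \<kappa>(2) \<gamma>(2)
    using d\<beta>'c by simp
  then have "pi_hom src tgt M B \<beta>" using pi_hom_iff_d0[OF rM p(7)] \<beta> by blast
  moreover have "g i * \<beta> i = \<alpha> i" for i
  proof -
    have "g i * (f i * \<kappa> i) = 0\<^sub>m (dimv C i) (dimv M i)"
      unfolding assoc_mult_mat[OF p(10) p(9) cochain0D[OF \<kappa>(1)], symmetric] ses_comp_zero[OF ses]
      by (rule left_mult_zero_mat[OF cochain0D[OF \<kappa>(1)]])
    then show ?thesis unfolding \<beta>_def
      mult_minus_distrib_mat[OF p(10) cochain0D[OF \<beta>'] cochain0D[OF f\<kappa>]] g\<beta>'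
      by (simp add: mat_diff_zero[OF \<alpha>c])
  qed
  ultimately show thesis by (rule that)
qed

lemma hom_extend_through_sub:
  assumes ses: "pi_ses src tgt A B C f g" and N: "pi_module src tgt N"
    and H: "H1_zero C N" and \<beta>: "pi_hom src tgt A N \<beta>"
  obtains \<delta> where "pi_hom src tgt B N \<delta>" "\<And>i. \<delta> i * f i = \<beta> i"
proof -
  note p = pi_sesD[OF ses] and rN = pi_moduleD[OF N]
  obtain t where t: "cochain0 C B t" "\<And>i. g i * t i = 1\<^sub>m (dimv C i)" using ses_section[OF ses] by blast
  obtain R where R: "\<And>i. R i \<in> carrier_mat (dimv A i) (dimv B i)" "\<And>i. R i * f i = 1\<^sub>m (dimv A i)"
    using ses_retraction[OF ses t] by blast
  note \<beta>c = cochain0D[OF pi_homD(1)[OF \<beta>]]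
  define \<delta>' where "\<delta>' i = \<beta> i * R i" for i
  have \<delta>': "cochain0 B N \<delta>'" unfolding \<delta>'_def cochain0_def using \<beta>c R(1)
    by (metis mult_carrier_mat)
  have \<delta>'f: "\<delta>' i * f i = \<beta> i" for i
    unfolding \<delta>'_def assoc_mult_mat[OF \<beta>c R(1) p(9)] R(2) by (rule right_mult_one_mat[OF \<beta>c])
  note d\<delta>'c = cochain1D(1)[OF d0_cochain1[OF p(7) rN \<delta>']]
  have "d0 B N \<delta>' e * f (ds e) = 0\<^sub>m (dimv N (dt e)) (dimv A (ds e))" for e
  proof -
    have "d0 B N \<delta>' e * f (ds e) = d0 A N \<beta> e"
      using d0_comp_right[OF p(7) rN p(6) \<delta>' p(4), of e] \<delta>'f by simp
    also have "\<dots> = 0\<^sub>m (dimv N (dt e)) (dimv A (ds e))" using \<beta> pi_hom_iff_d0[OF p(6) rN] by blast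
    finally show ?thesis .
  qed
  then obtain \<nu> where \<nu>: "cocycle C N \<nu>" "\<And>e. d0 B N \<delta>' e = \<nu> e * g (ds e)"
    using ses_factor_cocycle_through_quotient[OF ses rN cocycle_d0[OF p(2) N \<delta>']] by blast
  obtain \<eta> where \<eta>: "cochain0 C N \<eta>" "d0 C N \<eta> = \<nu>" using H \<nu>(1)
    unfolding H1_zero_def by blast
  define \<delta> where "\<delta> i = \<delta>' i - \<eta> i * g i" for i
  have \<eta>g: "cochain0 B N (\<lambda>i. \<eta> i * g i)" unfolding cochain0_def
    using cochain0D[OF \<eta>(1)] p(10) by (metis mult_carrier_mat)
  have \<delta>: "cochain0 B N \<delta>" unfolding \<delta>_def by (rule cochain0_minus[OF \<delta>' \<eta>g])
  have "d0 B N \<delta> e = 0\<^sub>m (dimv N (dt e)) (dimv B (ds e))" for e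
    unfolding \<delta>_def d0_minus[OF p(7) rN \<delta>' \<eta>g] d0_comp_right[OF p(8) rN p(7) \<eta>(1) p(5)]
      \<eta>(2) \<nu>(2)[symmetric]
    using d\<delta>'c by simp
  then have "pi_hom src tgt B N \<delta>" using pi_hom_iff_d0[OF p(7) rN] \<delta> by blast
  moreover have "\<delta> i * f i = \<beta> i" for i
  proof -
    have "\<eta> i * g i * f i = 0\<^sub>m (dimv N i) (dimv A i)"
      unfolding assoc_mult_mat[OF cochain0D[OF \<eta>(1)] p(10) p(9)] ses_comp_zero[OF ses]
      by (rule right_mult_zero_mat[OF cochain0D[OF \<eta>(1)]])
    then show ?thesis unfolding \<delta>_def
      minus_mult_distrib_mat[OF cochain0D[OF \<delta>'] cochain0D[OF \<eta>g] p(9)] \<delta>'f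
      by (simp add: mat_diff_zero[OF \<beta>c])
  qed
  ultimately show thesis by (rule that)
qed

lemma coboundary_if_pullback_coboundary:
  assumes ses: "pi_ses src tgt A B C f g" and N: "is_rep N" and \<phi>: "cochain1 C N \<phi>"
    and \<tau>: "cochain0 B N \<tau>" and d\<tau>: "\<And>e. d0 B N \<tau> e = \<phi> e * g (ds e)"
    and \<psi>: "pi_hom src tgt B N \<psi>" and \<psi>f: "\<And>i. \<psi> i * f i = \<tau> i * f i"
  shows "\<exists>\<omega>. cochain0 C N \<omega> \<and> d0 C N \<omega> = \<phi>"
proof -
  note p = pi_sesD[OF ses]
  obtain t where t: "cochain0 C B t" "\<And>i. g i * t i = 1\<^sub>m (dimv C i)" using ses_section[OF ses] by blast
  note \<tau>c = cochain0D[OF \<tau>] and \<psi>0 = pi_homD(1)[OF \<psi>]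
  have \<tau>\<psi>: "cochain0 B N (\<lambda>i. \<tau> i - \<psi> i)" by (rule cochain0_minus[OF \<tau> \<psi>0])
  define \<omega> where "\<omega> i = (\<tau> i - \<psi> i) * t i" for i
  have \<omega>: "cochain0 C N \<omega>" unfolding \<omega>_def cochain0_def
    using cochain0D[OF \<tau>\<psi>] cochain0D[OF t(1)]
    by (metis mult_carrier_mat)
  have \<omega>g: "\<tau> i - \<psi> i = \<omega> i * g i" for i
  proof -
    have "(\<tau> i - \<psi> i) * f i = 0\<^sub>m (dimv N i) (dimv A i)"
      using minus_mult_distrib_mat[OF \<tau>c cochain0D[OF \<psi>0] p(9)] \<psi>f
        mult_carrier_mat[OF \<tau>c p(9)] by simp
    then show ?thesis unfolding \<omega>_def by (rule ses_factor_through_quotient[OF ses t cochain0D[OF \<tau>\<psi>]])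
  qed
  have "d0 C N \<omega> e = \<phi> e" for e
  proof -
    note d\<omega>c = cochain1D(1)[OF d0_cochain1[OF p(8) N \<omega>], of e] and \<phi>c = cochain1D(1)[OF \<phi>, of e]
    have "d0 C N \<omega> e * g (ds e) = d0 B N (\<lambda>i. \<tau> i - \<psi> i) e"
      unfolding \<omega>g by (rule d0_comp_right[OF p(8) N p(7) \<omega> p(5), symmetric])
    also have "\<dots> = \<phi> e * g (ds e)"
    proof -
      have "d0 B N \<psi> e = 0\<^sub>m (dimv N (dt e)) (dimv B (ds e))" using \<psi> pi_hom_iff_d0[OF p(7) N] by blast
      then show ?thesis unfolding d0_minus[OF p(7) N \<tau> \<psi>0] d\<tau>
        by (simp add: mat_diff_zero[OF mult_carrier_mat[OF \<phi>c p(10)]])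
    qed
    finally have "(\<phi> e - d0 C N \<omega> e) * g (ds e) = 0\<^sub>m (dimv N (dt e)) (dimv B (ds e))"
      unfolding minus_mult_distrib_mat[OF \<phi>c d\<omega>c p(10)] using mult_carrier_mat[OF \<phi>c p(10)] by simp
    then have "\<phi> e - d0 C N \<omega> e = 0\<^sub>m (dimv N (dt e)) (dimv C (ds e))"
      by (rule ses_quotient_cancel[OF ses t minus_carrier_mat[OF d\<omega>c]])
    then show ?thesis using mat_diff_eq_zero_iff[OF \<phi>c d\<omega>c] by simp
  qed
  with \<omega> show ?thesis by blast
qed

lemma H1_zero_middle_self:
  assumes ses: "pi_ses src tgt x2 x x1 f g"
    and H22: "H1_zero x2 x2" and Hx1: "H1_zero x x1" and H1x: "H1_zero x1 x"
  shows "H1_zero x x"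
  unfolding H1_zero_def
proof (intro allI impI)
  fix \<phi> assume \<phi>: "cocycle x x \<phi>"
  note p = pi_sesD[OF ses]
  obtain \<tau> \<psi> where \<tau>: "cochain0 x x \<tau>" and \<psi>: "cocycle x x2 \<psi>"
    and \<phi>_eq: "\<And>e. \<phi> e = d0 x x \<tau> e + f (dt e) * \<psi> e"
    using cocycle_cohomologous_through_sub[OF ses p(2) Hx1 \<phi>] by blast
  obtain \<rho> \<chi> where \<rho>: "cochain0 x x2 \<rho>" and \<chi>: "cocycle x1 x2 \<chi>"
    and \<psi>_eq: "\<And>e. \<psi> e = d0 x x2 \<rho> e + \<chi> e * g (ds e)"
    using cocycle_cohomologous_through_quotient[OF ses p(1) H22 \<psi>] by blast
  have "cocycle x1 x (\<lambda>e. f (dt e) * \<chi> e)" by (rule cocycle_comp_left[OF p(8) p(6) p(7) \<chi> p(4)])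
  then obtain \<mu> where \<mu>: "cochain0 x1 x \<mu>" "d0 x1 x \<mu> = (\<lambda>e. f (dt e) * \<chi> e)"
    using H1x unfolding H1_zero_def by blast
  define \<sigma> where "\<sigma> i = \<tau> i + (f i * \<rho> i + \<mu> i * g i)" for i
  have f\<rho>: "cochain0 x x (\<lambda>i. f i * \<rho> i)" by (rule cochain0_comp[OF \<rho> pi_homD(1)[OF p(4)]])
  have \<mu>g: "cochain0 x x (\<lambda>i. \<mu> i * g i)"
    unfolding cochain0_def using cochain0D[OF \<mu>(1)] p(10) by (metis mult_carrier_mat)
  have \<sigma>: "cochain0 x x \<sigma>" unfolding \<sigma>_def by (intro cochain0_add \<tau> f\<rho> \<mu>g)
  have "d0 x x \<sigma> e = \<phi> e" for e
  proof -
    note \<chi>c = cochain1D(1)[OF cocycleD(1)[OF \<chi>]] and d\<rho>c = cochain1D(1)[OF d0_cochain1[OF p(7) p(6) \<rho>]]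
    have "d0 x x \<sigma> e = d0 x x \<tau> e + (f (dt e) * d0 x x2 \<rho> e + f (dt e) * \<chi> e * g (ds e))"
      unfolding \<sigma>_def d0_add[OF p(7) p(7) \<tau> cochain0_add[OF f\<rho> \<mu>g]]
        d0_add[OF p(7) p(7) f\<rho> \<mu>g]
        d0_comp_left[OF p(7) p(6) p(7) \<rho> p(4)] d0_comp_right[OF p(8) p(7) p(7) \<mu>(1) p(5)] \<mu>(2) ..
    also have "f (dt e) * d0 x x2 \<rho> e + f (dt e) * \<chi> e * g (ds e) = f (dt e) * \<psi> e"
      unfolding \<psi>_eq mult_add_distrib_mat[OF p(9) d\<rho>c mult_carrier_mat[OF \<chi>c p(10)]]
        assoc_mult_mat[OF p(9) \<chi>c p(10)] ..
    finally show ?thesis unfolding \<phi>_eq .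
  qed
  with \<sigma> show "\<exists>\<sigma>. cochain0 x x \<sigma> \<and> d0 x x \<sigma> = \<phi>" by blast
qed

lemma H1_zero_quotient_self:
  assumes ses: "pi_ses src tgt x2 x x1 f g"
    and H22: "H1_zero x2 x2" and Hx1: "H1_zero x x1" and H1x: "H1_zero x1 x"
  shows "H1_zero x1 x1"
  unfolding H1_zero_def
proof (intro allI impI)
  fix \<phi> assume \<phi>: "cocycle x1 x1 \<phi>"
  note p = pi_sesD[OF ses] and \<phi>c = cochain1D(1)[OF cocycleD(1)[OF \<phi>]]
  have "cocycle x x1 (\<lambda>e. \<phi> e * g (ds e))" by (rule cocycle_comp_right[OF p(8) p(8) p(7) \<phi> p(5)])
  then obtain \<tau> where \<tau>: "cochain0 x x1 \<tau>" "d0 x x1 \<tau> = (\<lambda>e. \<phi> e * g (ds e))"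
    using Hx1 unfolding H1_zero_def by blast
  have "pi_hom src tgt x2 x1 (\<lambda>i. \<tau> i * f i)"
  proof (rule pi_homI[OF p(6) p(8)])
    show "cochain0 x2 x1 (\<lambda>i. \<tau> i * f i)"
      unfolding cochain0_def using cochain0D[OF \<tau>(1)] p(9) by (metis mult_carrier_mat)
    show "d0 x2 x1 (\<lambda>i. \<tau> i * f i) e = 0\<^sub>m (dimv x1 (dt e)) (dimv x2 (ds e))" for e
      unfolding d0_comp_right[OF p(7) p(8) p(6) \<tau>(1) p(4)] \<tau>(2)
        assoc_mult_mat[OF \<phi>c p(10) p(9)] ses_comp_zero[OF ses]
      by (rule right_mult_zero_mat[OF \<phi>c])
  qed
  then obtain \<beta> where \<beta>: "pi_hom src tgt x2 x \<beta>" "\<And>i. g i * \<beta> i = \<tau> i * f i"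
    using hom_lift_through_quotient[OF ses p(1) H22] by blast
  obtain \<delta> where \<delta>: "pi_hom src tgt x x \<delta>" "\<And>i. \<delta> i * f i = \<beta> i"
    using hom_extend_through_sub[OF ses p(2) H1x \<beta>(1)] by blast
  note \<delta>0 = pi_homD(1)[OF \<delta>(1)]
  have g\<delta>: "pi_hom src tgt x x1 (\<lambda>i. g i * \<delta> i)"
  proof (rule pi_homI[OF p(7) p(8) cochain0_comp[OF \<delta>0 pi_homD(1)[OF p(5)]]])
    show "d0 x x1 (\<lambda>i. g i * \<delta> i) e = 0\<^sub>m (dimv x1 (dt e)) (dimv x (ds e))" for e
      unfolding d0_comp_left[OF p(7) p(7) p(8) \<delta>0 p(5)] pi_hom_d0[OF p(7) p(7) \<delta>(1)]
      by (rule right_mult_zero_mat[OF p(10)])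
  qed
  have "g i * \<delta> i * f i = \<tau> i * f i" for i
    unfolding assoc_mult_mat[OF p(10) cochain0D[OF \<delta>0] p(9)] \<delta>(2) \<beta>(2) ..
  then show "\<exists>\<sigma>. cochain0 x1 x1 \<sigma> \<and> d0 x1 x1 \<sigma> = \<phi>"
    using coboundary_if_pullback_coboundary[OF ses p(8) cocycleD(1)[OF \<phi>] \<tau>(1) _ g\<delta>] \<tau>(2) by simp
qed

end

section \<open>Extensions and 1-cocycles\<close>

definition extension :: "('i,'a,'k::field) pirep \<Rightarrow> ('i,'a,'k) pirep \<Rightarrow>
  ('a \<times> bool \<Rightarrow> 'k mat) \<Rightarrow> ('i,'a,'k) pirep" where
  "extension M N \<phi> = \<lparr>dimv = (\<lambda>i. dimv N i + dimv M i), mp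
    = (\<lambda>e. upper_block (mp N e) (\<phi> e) (mp M e))\<rparr>"

lemma dimv_extension[simp]: "dimv (extension M N \<phi>) i = dimv N i + dimv M i"
  and mp_extension[simp]: "mp (extension M N \<phi>) e = upper_block (mp N e) (\<phi> e) (mp M e)"
  by (simp_all add: extension_def)

context quiver begin

lemma preproj_rel_extension:
  assumes rM: "is_rep M" and rN: "is_rep N" and \<phi>: "cochain1 M N \<phi>"
  shows "preproj_rel (extension M N \<phi>) i = upper_block (preproj_rel N i) (d1 M N \<phi> i) (preproj_rel M i)"
proof -
  let ?E = "extension M N \<phi>"
  have in_tgt: "mp ?E (h,True) * mp ?E (h,False) = upper_block (mp N (h,True) * mp N (h,False))
      (mp N (h,True) * \<phi> (h,False) + \<phi> (h,True) * mp M (h,False)) (mp M (h,True) * mp M (h,False))" for h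
    unfolding mp_extension by (rule upper_block_mult[OF is_repD(1)[OF rN] cochain1D(2)[OF \<phi>] is_repD(1)[OF rM]
      is_repD(2)[OF rN] cochain1D(3)[OF \<phi>] is_repD(2)[OF rM]])
  have in_src: "mp ?E (h,False) * mp ?E (h,True) = upper_block (mp N (h,False) * mp N (h,True))
      (mp N (h,False) * \<phi> (h,True) + \<phi> (h,False) * mp M (h,True)) (mp M (h,False) * mp M (h,True))" for h
    unfolding mp_extension by (rule upper_block_mult[OF is_repD(2)[OF rN] cochain1D(3)[OF \<phi>] is_repD(2)[OF rM]
      is_repD(1)[OF rN] cochain1D(2)[OF \<phi>] is_repD(1)[OF rM]])
  note carriers = mult_carrier_mat[OF is_repD(1)[OF rN] is_repD(2)[OF rN]]
    mult_carrier_mat[OF is_repD(1)[OF rM] is_repD(2)[OF rM]]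
    mult_carrier_mat[OF is_repD(2)[OF rN] is_repD(1)[OF rN]] mult_carrier_mat[OF is_repD(2)[OF rM] is_repD(1)[OF rM]]
    d1_tgt_summand_carrier[OF rM rN \<phi>] d1_src_summand_carrier[OF rM rN \<phi>]
  have "preproj_rel ?E i =
      upper_block (mat_sum (dimv N i) (dimv N i) {h. tgt h = i} (\<lambda>h. mp N (h,True) * mp N (h,False)))
        (mat_sum (dimv N i) (dimv M i) {h. tgt h = i}
          (\<lambda>h. mp N (h,True) * \<phi> (h,False) + \<phi> (h,True) * mp M (h,False)))
        (mat_sum (dimv M i) (dimv M i) {h. tgt h = i} (\<lambda>h. mp M (h,True) * mp M (h,False)))
    - upper_block (mat_sum (dimv N i) (dimv N i) {h. src h = i} (\<lambda>h. mp N (h,False) * mp N (h,True)))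
        (mat_sum (dimv N i) (dimv M i) {h. src h = i}
          (\<lambda>h. mp N (h,False) * \<phi> (h,True) + \<phi> (h,False) * mp M (h,True)))
        (mat_sum (dimv M i) (dimv M i) {h. src h = i} (\<lambda>h. mp M (h,False) * mp M (h,True)))"
    unfolding preproj_rel_def dimv_extension in_tgt in_src
    by (subst (1 2) mat_sum_upper_block) (use carriers in force)+
  also have "\<dots> = upper_block (preproj_rel N i) (d1 M N \<phi> i) (preproj_rel M i)"
    unfolding preproj_rel_def d1_def by (rule upper_block_minus) (rule mat_sum_carrier)+
  finally show ?thesis .
qed

lemma extension_ses:
  fixes M N :: "('i,'a,'k::field) pirep"
  assumes M: "pi_module src tgt M" and N: "pi_module src tgt N" and \<phi>: "cocycle M N \<phi>"
  shows "pi_ses src tgt N (extension M N \<phi>) M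
    (\<lambda>i. block_incl (dimv N i) (dimv M i)) (\<lambda>i. block_proj2 (dimv N i) (dimv M i))"
proof -
  have rM: "is_rep M" and rN: "is_rep N" and \<phi>c: "cochain1 M N \<phi>" using M N \<phi>
    by (auto dest: pi_moduleD cocycleD)
  have "is_rep (extension M N \<phi>)"
    unfolding is_rep_def by (simp add: upper_block_carrier[OF is_repD(3)[OF rN] is_repD(3)[OF rM]])
  then have "pi_module src tgt (extension M N \<phi>)"
    using M N cocycleD(2)[OF \<phi>] unfolding pi_module_iff preproj_rel_extension[OF rM rN \<phi>c]
    by (simp add: upper_block_zero)
  moreover have "pi_hom src tgt N (extension M N \<phi>) (\<lambda>i. block_incl (dimv N i) (dimv M i))"
    unfolding pi_hom_def using upper_block_block_incl[OF is_repD(3)[OF rN] cochain1D(1)[OF \<phi>c] is_repD(3)[OF rM]]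
    by simp
  moreover have "pi_hom src tgt (extension M N \<phi>) M (\<lambda>i. block_proj2 (dimv N i) (dimv M i))"
    unfolding pi_hom_def using block_proj2_upper_block[OF is_repD(3)[OF rN] cochain1D(1)[OF \<phi>c] is_repD(3)[OF rM]]
    by simp
  moreover have "\<forall>i. \<forall>u \<in> carrier_vec (dimv N i).
      block_incl (dimv N i) (dimv M i) *\<^sub>v u = 0\<^sub>v (dimv N i + dimv M i) \<longrightarrow> u
        = 0\<^sub>v (dimv N i)"
    using block_incl_inj by blast
  moreover have "\<forall>i. \<forall>v \<in> carrier_vec (dimv N i + dimv M i).
      block_proj2 (dimv N i) (dimv M i) *\<^sub>v v = 0\<^sub>v (dimv M i) \<longleftrightarrow>
      (\<exists>u \<in> carrier_vec (dimv N i). block_incl (dimv N i) (dimv M i) *\<^sub>v u = v)"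
    using block_proj2_kernel by blast
  moreover have "\<forall>i. \<forall>w \<in> carrier_vec (dimv M i).
      \<exists>v \<in> carrier_vec (dimv N i + dimv M i). block_proj2 (dimv N i) (dimv M i) *\<^sub>v v = w"
    using block_proj2_surj by blast
  ultimately show ?thesis unfolding pi_ses_def dimv_extension using M N by blast
qed

lemma extension_split_imp_coboundary:
  assumes rM: "is_rep M" and rN: "is_rep N" and \<phi>c: "cochain1 M N \<phi>"
    and s: "pi_hom src tgt M (extension M N \<phi>) s"
    and s_section: "\<And>i. block_proj2 (dimv N i) (dimv M i) * s i = 1\<^sub>m (dimv M i)"
  shows "\<exists>\<sigma>. cochain0 M N \<sigma> \<and> d0 M N \<sigma> = \<phi>"
proof -
  have sc: "\<And>i. s i \<in> carrier_mat (dimv N i + dimv M i) (dimv M i)"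
    using cochain0D[OF pi_homD(1)[OF s]] by simp
  define \<sigma> where "\<sigma> i = block_proj1 (dimv N i) (dimv M i) * s i" for i
  have sigc: "cochain0 M N \<sigma>" unfolding cochain0_def \<sigma>_def using sc
    by (metis mult_carrier_mat block_proj1_carrier)
  have "d0 M N \<sigma> e = \<phi> e" for e
  proof -
    note Me = is_repD(3)[OF rM, of e] and Ne = is_repD(3)[OF rN, of e] and phie = cochain1D(1)[OF \<phi>c, of e]
    note P1 = block_proj1_carrier[of "dimv N (dt e)" "dimv M (dt e)"] and Ee = upper_block_carrier[OF Ne Me, of "\<phi> e"]
    have hs: "s (dt e) * mp M e = upper_block (mp N e) (\<phi> e) (mp M e) * s (ds e)"
      using pi_homD(2)[OF s, of e] by simp
    have "\<sigma> (dt e) * mp M e = block_proj1 (dimv N (dt e)) (dimv M (dt e)) * (s (dt e) * mp M e)"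
      unfolding \<sigma>_def by (rule assoc_mult_mat[OF P1 sc Me])
    also have "\<dots> = (block_proj1 (dimv N (dt e)) (dimv M (dt e)) * upper_block (mp N e) (\<phi> e)
      (mp M e)) * s (ds e)"
      unfolding hs by (rule assoc_mult_mat[OF P1 Ee sc, symmetric])
    also have "\<dots> = (mp N e * block_proj1 (dimv N (ds e)) (dimv M (ds e))
      + \<phi> e * block_proj2 (dimv N (ds e)) (dimv M (ds e))) * s (ds e)"
      by (simp only: block_proj1_upper_block[OF Ne phie Me])
    also have "\<dots> = mp N e * (block_proj1 (dimv N (ds e)) (dimv M (ds e)) * s (ds e))
      + \<phi> e * (block_proj2 (dimv N (ds e)) (dimv M (ds e)) * s (ds e))"
      by (simp add: add_mult_distrib_mat[OF mult_carrier_mat[OF Ne block_proj1_carrier]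
        mult_carrier_mat[OF phie block_proj2_carrier] sc]
          assoc_mult_mat[OF Ne block_proj1_carrier sc] assoc_mult_mat[OF phie block_proj2_carrier sc])
    also have "\<dots> = mp N e * \<sigma> (ds e) + \<phi> e"
      using s_section[of "ds e"] right_mult_one_mat[OF phie] unfolding \<sigma>_def by simp
    finally have "\<sigma> (dt e) * mp M e = mp N e * \<sigma> (ds e) + \<phi> e" .
    then show ?thesis unfolding d0_def
      by (rule mat_eq_add_imp_diff_eq[OF mult_carrier_mat[OF cochain0D[OF sigc] Me]
        mult_carrier_mat[OF Ne cochain0D[OF sigc]] phie])
  qed
  then show ?thesis using sigc by blast
qed

lemma ext1_zero_imp_H1_zero:
  assumes M: "pi_module src tgt M" and N: "pi_module src tgt N" and ext: "ext1_zero src tgt M N"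
  shows "H1_zero M N"
  unfolding H1_zero_def
proof (intro allI impI)
  fix \<phi> assume \<phi>: "cocycle M N \<phi>"
  obtain s where s: "pi_hom src tgt M (extension M N \<phi>) s"
    "\<And>i. block_proj2 (dimv N i) (dimv M i) * s i = 1\<^sub>m (dimv M i)"
    using ext extension_ses[OF M N \<phi>] unfolding ext1_zero_def by blast
  then show "\<exists>\<sigma>. cochain0 M N \<sigma> \<and> d0 M N \<sigma> = \<phi>"
    by (rule extension_split_imp_coboundary[OF pi_moduleD[OF M] pi_moduleD[OF N] cocycleD(1)[OF \<phi>]])
qed

lemma H1_zero_imp_ext1_zero:
  assumes M: "pi_module src tgt M" and H: "H1_zero M N"
  shows "ext1_zero src tgt M N"
  unfolding ext1_zero_def
proof (intro allI impI)
  fix E f g assume ses: "pi_ses src tgt N E M f g"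
  show "\<exists>s. pi_hom src tgt M E s \<and> (\<forall>i. g i * s i = 1\<^sub>m (dimv M i))"
    using hom_lift_through_quotient[OF ses M H pi_hom_id[OF pi_moduleD[OF M]]] by metis
qed

end

section \<open>Symmetry of the vanishing of \<open>H\<^sup>1\<close>\<close>

lemma vector_space_fun: "vector_space (\<lambda>(c::'k::field) (f::'x \<Rightarrow> 'k) x. c * f x)"
  by unfold_locales (auto simp: fun_eq_iff algebra_simps)

lemma linear_functional_separating:
  fixes W :: "('x \<Rightarrow> 'k::field) set" and v
  assumes W0: "0 \<in> W" and Wadd: "\<And>a b. a \<in> W \<Longrightarrow> b \<in> W \<Longrightarrow> a + b \<in> W"
    and Wsc: "\<And>c a. a \<in> W \<Longrightarrow> (\<lambda>x. c * a x) \<in> W"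
    and vW: "v \<notin> W"
  shows "\<exists>l. Vector_Spaces.linear (\<lambda>(c::'k) (f::'x \<Rightarrow> 'k) x. c * f x) (*) l
    \<and> (\<forall>w\<in>W. l w = 0) \<and> l v = 1"
proof -
  interpret V: vector_space "\<lambda>(c::'k) (f::'x \<Rightarrow> 'k) x. c * f x" by (rule vector_space_fun)
  interpret K: vector_space "(*) :: 'k \<Rightarrow> 'k \<Rightarrow> 'k" by unfold_locales (auto simp: algebra_simps)
  interpret P: vector_space_pair "\<lambda>(c::'k) (f::'x \<Rightarrow> 'k) x. c * f x" "(*) :: 'k
    \<Rightarrow> 'k \<Rightarrow> 'k" ..
  have sub: "V.subspace W" unfolding V.subspace_def using W0 Wadd Wsc by auto
  obtain B where B: "B \<subseteq> W" "V.independent B" "W \<subseteq> V.span B"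
    using V.maximal_independent_subset by blast
  have spB: "V.span B = W" using B sub by (metis V.span_eq_iff V.span_mono subset_antisym)
  have vB: "v \<notin> V.span B" using spB vW by simp
  have ind: "V.independent (insert v B)" using V.independent_insertI[OF vB B(2)] .
  obtain l where l: "Vector_Spaces.linear (\<lambda>(c::'k) (f::'x \<Rightarrow> 'k) x. c * f x) (*) l"
     "\<forall>x\<in>insert v B. l x = (\<lambda>y. if y = v then 1 else 0) x"
    using P.linear_independent_extend[OF ind, of "\<lambda>y. if y = v then 1 else 0"] by blast
  have vnB: "v \<notin> B" using vB V.span_base by blast
  have "\<forall>w\<in>V.span B. l w = 0"
  proof
    fix w assume w: "w \<in> V.span B"
    have "\<And>x. x \<in> B \<Longrightarrow> l x = 0" using l(2) vnB by auto
    then show "l w = 0" using P.linear_eq_0_on_span[OF l(1)] w by blast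
  qed
  then show ?thesis using l spB by auto
qed

lemma linear_sum_scale:
  assumes l: "Vector_Spaces.linear (\<lambda>(c::'k::field) (f::'x \<Rightarrow> 'k) x. c * f x) (*) l"
    and S: "finite S"
  shows "l (\<Sum>x\<in>S. (\<lambda>y. a x * g x y)) = (\<Sum>x\<in>S. a x * l (g x))"
proof -
  have mh: "module_hom (\<lambda>(c::'k) (f::'x \<Rightarrow> 'k) x. c * f x) (*) l"
    using l module_hom_iff_linear by blast
  have "l (\<Sum>x\<in>S. (\<lambda>y. a x * g x y)) = (\<Sum>x\<in>S. l (\<lambda>y. a x * g x y))"
    by (rule module_hom.sum[OF mh])
  also have "\<dots> = (\<Sum>x\<in>S. a x * l (g x))"
    using module_hom.scale[OF mh] by (intro sum.cong) auto
  finally show ?thesis .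
qed

definition trace_pairing :: "('a \<times> bool \<Rightarrow> 'k::field mat) \<Rightarrow>
  ('a \<times> bool \<Rightarrow> 'k mat) \<Rightarrow> 'k" where
  "trace_pairing \<phi> \<psi> = (\<Sum>h\<in>UNIV. mat_trace (\<phi> (h,True) * \<psi> (h,False)) - mat_trace (\<phi> (h,False) * \<psi> (h,True)))"

context quiver begin

lemma mat_trace_mult_d1:
  assumes rM: "is_rep M" and rN: "is_rep N" and \<sigma>: "\<sigma> \<in> carrier_mat (dimv N i) (dimv M i)"
    and \<psi>: "cochain1 N M \<psi>"
  shows "mat_trace (\<sigma> * d1 N M \<psi> i) = (\<Sum>h\<in>{h. tgt h = i}. mat_trace
      (\<sigma> * (mp M (h,True) * \<psi> (h,False) + \<psi> (h,True) * mp N (h,False))))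
    - (\<Sum>h\<in>{h. src h = i}. mat_trace
      (\<sigma> * (mp M (h,False) * \<psi> (h,True) + \<psi> (h,False) * mp N (h,True))))"
proof -
  have cA: "\<forall>h\<in>{h. tgt h = i}.
      mp M (h,True) * \<psi> (h,False) + \<psi> (h,True) * mp N (h,False) \<in> carrier_mat (dimv M i) (dimv N i)"
    using d1_tgt_summand_carrier[OF rN rM \<psi>] by auto
  have cB: "\<forall>h\<in>{h. src h = i}.
      mp M (h,False) * \<psi> (h,True) + \<psi> (h,False) * mp N (h,True) \<in> carrier_mat (dimv M i) (dimv N i)"
    using d1_src_summand_carrier[OF rN rM \<psi>] by auto
  have \<sigma>A: "\<forall>h\<in>{h. tgt h = i}.
      \<sigma> * (mp M (h,True) * \<psi> (h,False) + \<psi> (h,True) * mp N (h,False))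
        \<in> carrier_mat (dimv N i) (dimv N i)"
    using cA \<sigma> by auto
  have \<sigma>B: "\<forall>h\<in>{h. src h = i}.
      \<sigma> * (mp M (h,False) * \<psi> (h,True) + \<psi> (h,False) * mp N (h,True))
        \<in> carrier_mat (dimv N i) (dimv N i)"
    using cB \<sigma> by auto
  show ?thesis
    unfolding d1_def mult_minus_distrib_mat[OF \<sigma> mat_sum_carrier mat_sum_carrier]
      mat_sum_mult_left[OF \<sigma> cA] mat_sum_mult_left[OF \<sigma> cB]
        mat_trace_minus[OF mat_sum_carrier mat_sum_carrier]
      mat_trace_mat_sum[OF \<sigma>A] mat_trace_mat_sum[OF \<sigma>B] ..
qed

lemma trace_pairing_d0:
  assumes rM: "is_rep M" and rN: "is_rep N" and s: "cochain0 M N \<sigma>" and psi: "cochain1 N M \<psi>"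
  shows "trace_pairing (d0 M N \<sigma>) \<psi> = (\<Sum>i\<in>UNIV. mat_trace (\<sigma> i * d1 N M \<psi> i))"
proof -
  note sc = cochain0D[OF s]
  define A where "A h = mp M (h,True) * \<psi> (h,False) + \<psi> (h,True) * mp N (h,False)" for h
  define B where "B h = mp M (h,False) * \<psi> (h,True) + \<psi> (h,False) * mp N (h,True)" for h
  have "mat_trace (\<sigma> i * d1 N M \<psi> i) = (\<Sum>h\<in>{h. tgt h = i}. mat_trace (\<sigma> (tgt h) * A h))
      - (\<Sum>h\<in>{h. src h = i}. mat_trace (\<sigma> (src h) * B h))" for i
    unfolding mat_trace_mult_d1[OF rM rN sc psi] A_def B_def by (intro arg_cong2[where f = minus] sum.cong) auto
  then have "(\<Sum>i\<in>UNIV. mat_trace (\<sigma> i * d1 N M \<psi> i)) =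
      (\<Sum>i\<in>UNIV. \<Sum>h\<in>{h. tgt h = i}. mat_trace (\<sigma> (tgt h) * A h))
        - (\<Sum>i\<in>UNIV. \<Sum>h\<in>{h. src h = i}. mat_trace (\<sigma> (src h) * B h))"
    by (simp add: sum_subtractf)
  also have "\<dots> = (\<Sum>h\<in>UNIV. mat_trace (\<sigma> (tgt h) * A h))
    - (\<Sum>h\<in>UNIV. mat_trace (\<sigma> (src h) * B h))"
    using sum_UNIV_fibres[of "\<lambda>h i. mat_trace (\<sigma> (tgt h) * A h)" tgt]
      sum_UNIV_fibres[of "\<lambda>h i. mat_trace (\<sigma> (src h) * B h)" src] by simp
  also have "\<dots> = (\<Sum>h\<in>UNIV. mat_trace (\<sigma> (tgt h) * A h) - mat_trace (\<sigma> (src h) * B h))"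
    by (simp add: sum_subtractf)
  also have "\<dots> = trace_pairing (d0 M N \<sigma>) \<psi>"
    unfolding trace_pairing_def
  proof (rule sum.cong[OF refl])
    fix h
    show "mat_trace (\<sigma> (tgt h) * A h) - mat_trace (\<sigma> (src h) * B h) =
      mat_trace (d0 M N \<sigma> (h, True) * \<psi> (h, False))
        - mat_trace (d0 M N \<sigma> (h, False) * \<psi> (h, True))"
      unfolding d0_def A_def B_def
      using mat_trace_adjoint_identity[OF sc[of "tgt h"] sc[of "src h"] is_repD(1)[OF rM] is_repD(1)[OF rN]
        is_repD(2)[OF rM] is_repD(2)[OF rN]
          cochain1D(3)[OF psi] cochain1D(2)[OF psi]] by simp
  qed
  finally show ?thesis by simp
qed

lemma trace_pairing_antisym: assumes phi: "cochain1 M N \<phi>" and chi: "cochain1 N M \<chi>"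
  shows "trace_pairing \<phi> \<chi> = - trace_pairing \<chi> \<phi>"
proof -
  have "trace_pairing \<phi> \<chi> = (\<Sum>h\<in>UNIV. - (mat_trace (\<chi> (h,True) * \<phi> (h,False)) - mat_trace (\<chi> (h,False) * \<phi> (h,True))))"
    unfolding trace_pairing_def
  proof (rule sum.cong[OF refl])
    fix h
    show "mat_trace (\<phi> (h, True) * \<chi> (h, False)) - mat_trace (\<phi> (h, False) * \<chi> (h, True)) =
       - (mat_trace (\<chi> (h, True) * \<phi> (h, False)) - mat_trace (\<chi> (h, False) * \<phi> (h, True)))"
      using mat_trace_mult_comm[OF cochain1D(2)[OF phi] cochain1D(3)[OF chi]]
        mat_trace_mult_comm[OF cochain1D(3)[OF phi] cochain1D(2)[OF chi]] by simp
  qed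
  also have "\<dots> = - trace_pairing \<chi> \<phi>" unfolding trace_pairing_def by (rule sum_negf)
  finally show ?thesis .
qed

lemma trace_orthogonal_cochain0_zero: fixes X :: "'i \<Rightarrow> 'k::field mat"
  assumes Xc: "\<And>i. X i \<in> carrier_mat (dimv M i) (dimv N i)"
    and orth: "\<And>\<sigma>. cochain0 M N \<sigma>
      \<Longrightarrow> (\<Sum>i\<in>UNIV. mat_trace (\<sigma> i * X i)) = 0"
  shows "X i0 = 0\<^sub>m (dimv M i0) (dimv N i0)"
proof (rule eq_matI)
  fix r c assume "r < dim_row (0\<^sub>m (dimv M i0) (dimv N i0) :: 'k mat)" "c < dim_col
    (0\<^sub>m (dimv M i0) (dimv N i0) :: 'k mat)"
  then have r: "r < dimv M i0" and c: "c < dimv N i0" by auto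
  define E :: "'k mat" where "E = mat (dimv N i0) (dimv M i0) (\<lambda>(a,b). if a = c \<and> b = r then 1 else 0)"
  define \<sigma> where "\<sigma> j = (if j = i0 then E else 0\<^sub>m (dimv N j) (dimv M j))" for j
  have sc: "cochain0 M N \<sigma>" unfolding cochain0_def \<sigma>_def E_def by auto
  have "(\<Sum>i\<in>UNIV. mat_trace (\<sigma> i * X i)) = (\<Sum>i\<in>{i0}. mat_trace (\<sigma> i * X i))"
  proof (rule sum.mono_neutral_right)
    show "\<forall>i\<in>UNIV - {i0}. mat_trace (\<sigma> i * X i) = 0"
    proof
      fix i assume "i \<in> UNIV - {i0}"
      then have "\<sigma> i * X i = 0\<^sub>m (dimv N i) (dimv N i)" unfolding \<sigma>_def
        using left_mult_zero_mat[OF Xc[of i]] by simp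
      then show "mat_trace (\<sigma> i * X i) = 0" unfolding mat_trace_def by simp
    qed
  qed auto
  also have "\<dots> = mat_trace (\<sigma> i0 * X i0)" by simp
  also have "\<dots> = (\<Sum>a<dimv N i0. \<Sum>b<dimv M i0. E $$ (a,b) * X i0 $$ (b,a))"
    unfolding \<sigma>_def by (simp add: mat_trace_mult[OF _ Xc] E_def)
  also have "\<dots> = (\<Sum>a<dimv N i0. if a = c then X i0 $$ (r, a) else 0)"
  proof (rule sum.cong[OF refl])
    fix a assume a: "a \<in> {..<dimv N i0}"
    have "(\<Sum>b<dimv M i0. E $$ (a,b) * X i0 $$ (b,a))
      = (\<Sum>b<dimv M i0. if b = r then (if a = c then X i0 $$ (b,a) else 0) else 0)"
      using a by (intro sum.cong) (auto simp: E_def)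
    also have "\<dots> = (if a = c then X i0 $$ (r, a) else 0)" using r by (simp only: sum_lessThan_delta) simp
    finally show "(\<Sum>b<dimv M i0. E $$ (a,b) * X i0 $$ (b,a)) = (if a = c then X i0 $$ (r, a) else 0)" .
  qed
  also have "\<dots> = X i0 $$ (r,c)" using c by (simp only: sum_lessThan_delta) simp
  finally show "X i0 $$ (r,c) = 0\<^sub>m (dimv M i0) (dimv N i0) $$ (r,c)" using orth[OF sc] r c by simp
qed (use Xc in auto)

definition cochain1_coords :: "('i,'a,'k::field) pirep \<Rightarrow> ('i,'a,'k) pirep \<Rightarrow>
  ('a \<times> bool \<Rightarrow> 'k mat) \<Rightarrow> ('a \<times> bool) \<times> nat \<times> nat
  \<Rightarrow> 'k" where
  "cochain1_coords N M \<chi> = (\<lambda>(e,r,c). if r < dimv M (dt e) \<and> c < dimv N (ds e) then \<chi> e $$ (r,c) else 0)"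

definition cochain1_index :: "('i,'a,'k::field) pirep \<Rightarrow> ('i,'a,'k) pirep \<Rightarrow>
  (('a \<times> bool) \<times> nat \<times> nat) set" where
  "cochain1_index N M = (SIGMA e:UNIV. {..<dimv M (dt e)} \<times> {..<dimv N (ds e)})"

lemma cochain1_index_finite: "finite (cochain1_index N M)" unfolding cochain1_index_def by auto

lemma cochain1_coords_inj: assumes "cochain1 N M \<chi>" "cochain1 N M \<chi>'" "cochain1_coords N M \<chi>
  = cochain1_coords N M \<chi>'" shows "\<chi> = \<chi>'"
proof (rule ext, rule eq_matI)
  fix e r c assume "r < dim_row (\<chi>' e)" "c < dim_col (\<chi>' e)"
  then have rc: "r < dimv M (dt e)" "c < dimv N (ds e)" using cochain1D(1)[OF assms(2), of e] by auto
  show "\<chi> e $$ (r,c) = \<chi>' e $$ (r,c)" using fun_cong[OF assms(3), of "(e,r,c)"] rc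
    unfolding cochain1_coords_def by simp
qed (simp_all add: carrier_matD[OF cochain1D(1)[OF assms(1)]] carrier_matD[OF cochain1D(1)[OF assms(2)]])

lemma cochain1_coords_sum: "cochain1_coords N M \<chi>
  = (\<Sum>x\<in>cochain1_index N M. (\<lambda>y. \<chi> (fst x) $$ (fst (snd x), snd (snd x)) * (if x = y then 1 else 0)))"
proof (rule ext)
  fix y :: "('a \<times> bool) \<times> nat \<times> nat"
  have "(\<Sum>x\<in>cochain1_index N M.
    (\<lambda>y. \<chi> (fst x) $$ (fst (snd x), snd (snd x)) * (if x = y then 1 else 0))) y
      = (\<Sum>x\<in>cochain1_index N M. \<chi> (fst x) $$ (fst (snd x), snd (snd x)) * (if x = y then 1 else 0))"
    by (rule sum_fun_apply[OF cochain1_index_finite])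
  also have "\<dots> = (\<Sum>x\<in>cochain1_index N M. if y = x then \<chi> (fst x) $$ (fst (snd x), snd (snd x)) else 0)"
    by (rule sum.cong) auto
  also have "\<dots> = (if y \<in> cochain1_index N M then \<chi> (fst y) $$ (fst (snd y), snd (snd y)) else 0)"
    by (rule sum.delta'[OF cochain1_index_finite])
  also have "\<dots> = cochain1_coords N M \<chi> y" unfolding cochain1_coords_def cochain1_index_def by (cases y) auto
  finally show "cochain1_coords N M \<chi> y
    = (\<Sum>x\<in>cochain1_index N M. (\<lambda>y. \<chi> (fst x) $$ (fst (snd x), snd (snd x)) * (if x = y then 1 else 0))) y" by simp
qed

lemma sum_cochain1_index: "(\<Sum>x\<in>cochain1_index N M. F x)
  = (\<Sum>e\<in>UNIV. \<Sum>r<dimv M (dt e). \<Sum>c<dimv N (ds e). F (e,r,c))"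
proof -
  have "(\<Sum>x\<in>cochain1_index N M. F x)
    = (\<Sum>e\<in>UNIV. \<Sum>rc\<in>{..<dimv M (dt e)} \<times> {..<dimv N (ds e)}. F (e,rc))"
    unfolding cochain1_index_def using sum.Sigma[of "UNIV" "\<lambda>e. {..<dimv M (dt e)} \<times> {..<dimv N (ds e)}" "\<lambda>e rc. F (e, rc)"] by simp
  also have "\<dots> = (\<Sum>e\<in>UNIV. \<Sum>r<dimv M (dt e). \<Sum>c<dimv N (ds e). F (e,r,c))"
    by (rule sum.cong[OF refl]) (rule sum.cartesian_product')
  finally show ?thesis .
qed

definition coboundary_coords :: "('i,'a,'k::field) pirep \<Rightarrow> ('i,'a,'k) pirep \<Rightarrow>
  (('a \<times> bool) \<times> nat \<times> nat \<Rightarrow> 'k) set" where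
  "coboundary_coords M N = {cochain1_coords M N (d0 M N \<tau>) | \<tau>. cochain0 M N \<tau>}"

lemma coboundary_coords_zero:
  assumes rM: "is_rep M" and rN: "is_rep N"
  shows "0 \<in> coboundary_coords M N"
proof -
  have c0: "cochain0 M N (\<lambda>i. 0\<^sub>m (dimv N i) (dimv M i))" unfolding cochain0_def by simp
  have z: "d0 M N (\<lambda>i. 0\<^sub>m (dimv N i) (dimv M i)) e = 0\<^sub>m (dimv N (dt e)) (dimv M (ds e))" for e
    unfolding d0_def using left_mult_zero_mat[OF is_repD(3)[OF rM, of e]]
      right_mult_zero_mat[OF is_repD(3)[OF rN, of e]]
    by simp
  have "cochain1_coords M N (d0 M N (\<lambda>i. 0\<^sub>m (dimv N i) (dimv M i))) = 0"
    unfolding cochain1_coords_def z by (auto simp: fun_eq_iff)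
  then show ?thesis unfolding coboundary_coords_def using c0 by (metis (mono_tags, lifting) mem_Collect_eq)
qed

lemma coboundary_coords_add:
  assumes rM: "is_rep M" and rN: "is_rep N" and ab: "a \<in> coboundary_coords M N" "b \<in> coboundary_coords M N"
  shows "a + b \<in> coboundary_coords M N"
proof -
  obtain \<tau>1 where t1: "cochain0 M N \<tau>1" "a = cochain1_coords M N (d0 M N \<tau>1)"
    using ab(1) unfolding coboundary_coords_def by blast
  obtain \<tau>2 where t2: "cochain0 M N \<tau>2" "b = cochain1_coords M N (d0 M N \<tau>2)"
    using ab(2) unfolding coboundary_coords_def by blast
  have "a + b = cochain1_coords M N (d0 M N (\<lambda>i. \<tau>1 i + \<tau>2 i))"
    unfolding t1(2) t2(2) cochain1_coords_def d0_add[OF rM rN t1(1) t2(1)]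
    by (auto simp: fun_eq_iff carrier_matD[OF cochain1D(1)[OF d0_cochain1[OF rM rN t2(1)]]])
  then show ?thesis unfolding coboundary_coords_def using cochain0_add[OF t1(1) t2(1)] by blast
qed

lemma coboundary_coords_scale:
  assumes rM: "is_rep M" and rN: "is_rep N" and a: "a \<in> coboundary_coords M N"
  shows "(\<lambda>x. c * a x) \<in> coboundary_coords M N"
proof -
  obtain \<tau> where t: "cochain0 M N \<tau>" "a = cochain1_coords M N (d0 M N \<tau>)"
    using a unfolding coboundary_coords_def by blast
  have sc: "cochain0 M N (\<lambda>i. c \<cdot>\<^sub>m \<tau> i)" using t(1) unfolding cochain0_def by simp
  have "d0 M N (\<lambda>i. c \<cdot>\<^sub>m \<tau> i) e = c \<cdot>\<^sub>m d0 M N \<tau> e" for e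
  proof -
    note tc = cochain0D[OF t(1)] and Me = is_repD(3)[OF rM, of e] and Ne = is_repD(3)[OF rN, of e]
    show ?thesis unfolding d0_def mult_smult_assoc_mat[OF tc Me] mult_smult_distrib[OF Ne tc]
      by (rule smult_minus_distrib_mat[symmetric, OF mult_carrier_mat[OF tc Me] mult_carrier_mat[OF Ne tc]])
  qed
  then have "(\<lambda>x. c * a x) = cochain1_coords M N (d0 M N (\<lambda>i. c \<cdot>\<^sub>m \<tau> i))"
    unfolding t(2) cochain1_coords_def
    by (auto simp: fun_eq_iff carrier_matD[OF cochain1D(1)[OF d0_cochain1[OF rM rN t(1)]]])
  then show ?thesis unfolding coboundary_coords_def using sc by blast
qed

text \<open>The cochain in \<open>C\<^sup>1(M, N)\<close> representing, via the trace pairing, a linear functional on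
  the coordinate space of \<open>C\<^sup>1(N, M)\<close>.\<close>

definition functional_cochain :: "('i,'a,'k::field) pirep \<Rightarrow> ('i,'a,'k) pirep
    \<Rightarrow> ((('a \<times> bool) \<times> nat \<times> nat \<Rightarrow> 'k) \<Rightarrow> 'k)
      \<Rightarrow> 'a \<times> bool \<Rightarrow> 'k mat" where
  "functional_cochain M N l e = mat (dimv N (dt e)) (dimv M (ds e))
     (\<lambda>(a,b). (if snd e then 1 else -1) * l (\<lambda>y. if ((fst e, \<not> snd e), b, a) = y then 1 else 0))"

lemma functional_cochain_cochain1: "cochain1 M N (functional_cochain M N l)"
  unfolding cochain1_def functional_cochain_def by simp

lemma trace_pairing_functional_cochain:
  assumes l: "Vector_Spaces.linear (\<lambda>(c::'k::field) (f::('a \<times> bool) \<times> nat \<times> nat \<Rightarrow> 'k) x. c * f x) (*) l"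
    and \<chi>: "cochain1 N M \<chi>"
  shows "trace_pairing (functional_cochain M N l) \<chi> = l (cochain1_coords N M \<chi>)"
proof -
  define L where "L = (\<lambda>x. l (\<lambda>y. if x = y then 1 else 0))"
  define \<phi> where "\<phi> = functional_cochain M N l"
  have \<phi>_entry: "\<phi> e $$ (a,b) = (if snd e then 1 else -1) * L ((fst e, \<not> snd e), b, a)"
    if "a < dimv N (dt e)" "b < dimv M (ds e)" for e a b
    using that unfolding \<phi>_def functional_cochain_def L_def by simp
  define G where "G e = (\<Sum>r<dimv M (dt e). \<Sum>c<dimv N (ds e). \<chi> e $$ (r,c) * L (e,r,c))" for e
  have phiT: "\<phi> (h,True) \<in> carrier_mat (dimv N (tgt h)) (dimv M (src h))" for h
    unfolding \<phi>_def by (rule cochain1D(2)[OF functional_cochain_cochain1])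
  have phiF: "\<phi> (h,False) \<in> carrier_mat (dimv N (src h)) (dimv M (tgt h))" for h
    unfolding \<phi>_def by (rule cochain1D(3)[OF functional_cochain_cochain1])
  have 1: "mat_trace (\<phi> (h,True) * \<chi> (h,False)) = G (h,False)" for h
  proof -
    have "mat_trace (\<phi> (h,True) * \<chi> (h,False))
      = (\<Sum>a<dimv N (tgt h). \<Sum>b<dimv M (src h). \<phi> (h,True) $$ (a,b) * \<chi> (h,False) $$ (b,a))"
      by (rule mat_trace_mult[OF phiT cochain1D(3)[OF \<chi>]])
    also have "\<dots> = (\<Sum>a<dimv N (tgt h). \<Sum>b<dimv M (src h). \<chi> (h,False) $$ (b,a) * L
      ((h,False),b,a))"
      by (intro sum.cong refl) (auto simp: \<phi>_entry)
    also have "\<dots> = G (h,False)" unfolding G_def by (simp add: sum.swap[of _ "{..<dimv N (tgt h)}"])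
    finally show ?thesis .
  qed
  have 2: "mat_trace (\<phi> (h,False) * \<chi> (h,True)) = - G (h,True)" for h
  proof -
    have "mat_trace (\<phi> (h,False) * \<chi> (h,True))
      = (\<Sum>a<dimv N (src h). \<Sum>b<dimv M (tgt h). \<phi> (h,False) $$ (a,b) * \<chi> (h,True) $$ (b,a))"
      by (rule mat_trace_mult[OF phiF cochain1D(2)[OF \<chi>]])
    also have "\<dots> = (\<Sum>a<dimv N (src h). \<Sum>b<dimv M (tgt h).
      - (\<chi> (h,True) $$ (b,a) * L ((h,True),b,a)))"
      by (intro sum.cong refl) (auto simp: \<phi>_entry)
    also have "\<dots> = - G (h,True)" unfolding G_def by (simp add: sum_negf sum.swap[of _ "{..<dimv N (src h)}"])
    finally show ?thesis .
  qed
  have "trace_pairing \<phi> \<chi> = (\<Sum>h\<in>UNIV. G (h,True) + G (h,False))"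
    unfolding trace_pairing_def 1 2 by (simp add: add.commute)
  also have "\<dots> = (\<Sum>e\<in>UNIV. G e)" by (rule sum_UNIV_prod_bool[symmetric])
  also have "\<dots> = (\<Sum>x\<in>cochain1_index N M. \<chi> (fst x) $$ (fst (snd x), snd (snd x)) * L x)"
    unfolding sum_cochain1_index G_def by simp
  also have "\<dots> = l (cochain1_coords N M \<chi>)"
    unfolding cochain1_coords_sum L_def by (rule linear_sum_scale[OF l cochain1_index_finite, symmetric])
  finally show ?thesis unfolding \<phi>_def .
qed

lemma functional_cochain_cocycle:
  assumes rM: "is_rep M" and rN: "is_rep N"
    and l: "Vector_Spaces.linear (\<lambda>(c::'k::field) (f::('a \<times> bool) \<times> nat \<times> nat \<Rightarrow> 'k) x. c * f x) (*) l"
    and l_B: "\<forall>w\<in>coboundary_coords N M. l w = 0"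
  shows "cocycle M N (functional_cochain M N l)"
proof -
  let ?\<phi> = "functional_cochain M N l"
  note \<phi>c = functional_cochain_cochain1[of M N l]
  have "d1 M N ?\<phi> i = 0\<^sub>m (dimv N i) (dimv M i)" for i
  proof (rule trace_orthogonal_cochain0_zero[of "d1 M N ?\<phi>" N M])
    show "\<And>i. d1 M N ?\<phi> i \<in> carrier_mat (dimv N i) (dimv M i)" by (rule d1_carrier)
    fix \<tau> assume \<tau>: "cochain0 N M \<tau>"
    note d\<tau>c = d0_cochain1[OF rN rM \<tau>]
    have "(\<Sum>i\<in>UNIV. mat_trace (\<tau> i * d1 M N ?\<phi> i)) = trace_pairing (d0 N M \<tau>) ?\<phi>"
      by (rule trace_pairing_d0[OF rN rM \<tau> \<phi>c, symmetric])
    also have "\<dots> = - trace_pairing ?\<phi> (d0 N M \<tau>)" by (rule trace_pairing_antisym[OF d\<tau>c \<phi>c])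
    also have "\<dots> = - l (cochain1_coords N M (d0 N M \<tau>))"
      by (simp add: trace_pairing_functional_cochain[OF l d\<tau>c])
    also have "\<dots> = 0" using l_B \<tau> unfolding coboundary_coords_def by auto
    finally show "(\<Sum>i\<in>UNIV. mat_trace (\<tau> i * d1 M N ?\<phi> i)) = 0" .
  qed
  then show ?thesis unfolding cocycle_def using \<phi>c by simp
qed

text \<open>If \<open>\<psi>\<close> were a cocycle of \<open>C\<^sup>1(N, M)\<close> outside the coboundaries, a functional vanishing on
  the coboundaries but not on \<open>\<psi>\<close> would correspond to a cocycle \<open>\<phi> = d0 \<sigma>\<close> of \<open>C\<^sup>1(M, N)\<close>;
  adjointness of \<open>d0\<close> and \<open>d1\<close> then gives \<open>\<langle>\<phi>, \<psi>\<rangle> = \<langle>\<sigma>, d1 \<psi>\<rangle> = 0\<close>, a contradiction.\<close>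

lemma H1_zero_sym:
  fixes M N :: "('i,'a,'k::field) pirep"
  assumes M: "pi_module src tgt M" and N: "pi_module src tgt N" and H: "H1_zero M N"
  shows "H1_zero N M"
  unfolding H1_zero_def
proof (intro allI impI)
  fix \<psi> assume \<psi>: "cocycle N M \<psi>"
  note rM = pi_moduleD[OF M] and rN = pi_moduleD[OF N] and \<psi>c = cocycleD(1)[OF \<psi>]
  show "\<exists>\<tau>. cochain0 N M \<tau> \<and> d0 N M \<tau> = \<psi>"
  proof (rule ccontr)
    assume not_coboundary: "\<not> (\<exists>\<tau>. cochain0 N M \<tau> \<and> d0 N M \<tau> = \<psi>)"
    have "cochain1_coords N M \<psi> \<notin> coboundary_coords N M"
    proof
      assume "cochain1_coords N M \<psi> \<in> coboundary_coords N M"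
      then obtain \<tau> where \<tau>: "cochain0 N M \<tau>" "cochain1_coords N M \<psi>
        = cochain1_coords N M (d0 N M \<tau>)"
        unfolding coboundary_coords_def by blast
      have "\<psi> = d0 N M \<tau>" by (rule cochain1_coords_inj[OF \<psi>c d0_cochain1[OF rN rM \<tau>(1)] \<tau>(2)])
      with not_coboundary \<tau>(1) show False by blast
    qed
    then obtain l where l: "Vector_Spaces.linear
      (\<lambda>(c::'k) (f::('a \<times> bool) \<times> nat \<times> nat \<Rightarrow> 'k) x. c * f x) (*) l"
      "\<forall>w\<in>coboundary_coords N M. l w = 0" "l (cochain1_coords N M \<psi>) = 1"
      using linear_functional_separating[OF coboundary_coords_zero[OF rN rM]
          coboundary_coords_add[OF rN rM] coboundary_coords_scale[OF rN rM]] by blast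
    obtain \<sigma> where \<sigma>: "cochain0 M N \<sigma>" "d0 M N \<sigma> = functional_cochain M N l"
      using H functional_cochain_cocycle[OF rM rN l(1,2)] unfolding H1_zero_def by blast
    have "1 = trace_pairing (functional_cochain M N l) \<psi>"
      using trace_pairing_functional_cochain[OF l(1) \<psi>c] l(3) by simp
    also have "\<dots> = (\<Sum>i\<in>UNIV. mat_trace (\<sigma> i * d1 N M \<psi> i))"
      unfolding \<sigma>(2)[symmetric] by (rule trace_pairing_d0[OF rM rN \<sigma>(1) \<psi>c])
    also have "\<dots> = 0"
      using cocycleD(2)[OF \<psi>] right_mult_zero_mat[OF cochain0D[OF \<sigma>(1)]] by (simp add: mat_trace_def)
    finally show False by simp
  qed
qed

end

theorem lemma8p1:
  fixes src tgt :: "'a::finite \<Rightarrow> 'i::finite"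
    and x x1 x2 :: "('i, 'a, 'k::field) pirep"
    and f g :: "'i \<Rightarrow> 'k mat"
  assumes alg_closed: "\<forall>p :: 'k poly. 0 < degree p \<longrightarrow> (\<exists>z. poly p z = 0)"
    and no_loops: "\<forall>h. src h \<noteq> tgt h"
    and ses: "pi_ses src tgt x2 x x1 f g"
    and e22: "ext1_zero src tgt x2 x2"
    and ex1: "ext1_zero src tgt x x1"
  shows "ext1_zero src tgt x1 x1 \<and> ext1_zero src tgt x x"
proof -
  interpret quiver src tgt .
  note p = pi_sesD[OF ses]
  have H22: "H1_zero x2 x2" by (rule ext1_zero_imp_H1_zero[OF p(1) p(1) e22])
  have Hx1: "H1_zero x x1" by (rule ext1_zero_imp_H1_zero[OF p(2) p(3) ex1])
  have H1x: "H1_zero x1 x" by (rule H1_zero_sym[OF p(2) p(3) Hx1])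
  have "H1_zero x1 x1" by (rule H1_zero_quotient_self[OF ses H22 Hx1 H1x])
  moreover have "H1_zero x x" by (rule H1_zero_middle_self[OF ses H22 Hx1 H1x])
  ultimately show ?thesis using H1_zero_imp_ext1_zero p(2) p(3) by blast
qed

end
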